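(* Let $(X,d)$ be a compact doubling metric space with $\operatorname{diam}(X,d)=1/2$ and $\mathcal S$ a hyperbolic filling with parameters $a\ge\lambda\ge6$. Let $\rho:\mathcal S\to(0,\infty)$ satisfy (H1), (H2), (H3) and (H4) (with exponent $p$). Let $C\ge\eta_-^{-p}$ and let $(\mu_k)_{k\ge0}$ be probability mass functions, $\mu_k$ on $\mathcal S_k$, with $\mu_0$ the unit mass at $v_0$, such that for every $k\ge0$: $(\mu_k,\mu_{k+1})$ is $(C,\pi)$-compatible, $\mu_{k+1}$ is $(C,\pi)$-balanced, and there is a probability measure on $X\times X$ with marginals $\tilde\mu_k=\sum_{u\in\mathcal S_k}\mu_k(u)\delta_{\pi_1(u)}$ and $\tilde\mu_{k+1}$ giving zero mass to $\{(x_1,x_2):d(x_1,x_2)\ge(1+2\lambda a^{-1})a^{-k}\}$. Let $\mu$ be any subsequential weak limit of $(\tilde\mu_k)$. Then $\mu$ is $p$-homogeneous on $(X,\Theta_\rho)$; in particular $\dim_{\mathrm A}(X,\Theta_\rho)\le p$.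
   Context: Hyperbolic filling: $X_0\subset X_1\subset\cdots$ increasing, $X_n$ maximal $a^{-n}$-separated in $X$ ($X_0=\{x_0\}$); $\mathcal S_n=\{(x,n):x\in X_n\}$, $\mathcal S=\bigcup_n\mathcal S_n$, $\pi_1(x,n)=x$, $\pi_2(x,n)=n$, $v_0=(x_0,0)$, $B_v=B(\pi_1(v),a^{-\pi_2(v)})$. Each $(x,n)$, $n\ge1$, has a fixed parent $(y,n-1)$ with $d(x,y)=\min_{z\in X_{n-1}}d(x,z)$; descendants iterate the child relation; $\mathcal D_n(v)$ = descendants of $v$ in $\mathcal S_n$; genealogy $g(v)=(v_0,\dots,v_k=v)$ with $v_i$ parent of $v_{i+1}$. Graph $(\mathcal S,D_2)$: edges between a vertex and its parent, and horizontal edges between distinct $(x,n),(y,n)$ with $B(x,\lambda a^{-n})\cap B(y,\lambda a^{-n})\ne\emptyset$. Paths: vertex sequences with consecutive ones adjacent. $\pi(v)=\prod_{w\in g(v)}\rho(w)$, $L_\rho(\gamma)=\sum_{v\in\gamma}\pi(v)$. For distinct $x,y$: $\tilde n$ largest integer with $\{x,y\}\subset B(\tilde z,2a^{-\tilde n})$ for some $(\tilde z,\tilde n)\in\mathcal S$, $c(x,y)$ the set of such $(\tilde z,\tilde n)$, $\pi(c(x,y))=\max_{c(x,y)}\pi$. $\Gamma_n(x,y)$: paths $(v_1,\dots,v_k)$, $\pi_2(v_1)=\pi_2(v_k)=n$, $x\in B_{v_1}$, $y\in B_{v_k}$. (H1) $0<\eta_-\le\rho\le\eta_+<1$. (H2)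 $\pi(v)\le K_0\pi(w)$ for horizontally adjacent $v,w$. (H3) there is $K_1$ such that for distinct $x,y$ there is $n_0$ with $L_\rho(\gamma)\ge K_1^{-1}\pi(c(x,y))$ for all $n\ge n_0$, $\gamma\in\Gamma_n(x,y)$. (H4) $\sum_{w\in\mathcal D_n(v)}\pi(w)^p\le\pi(v)^p$ for all $v\in\mathcal S_m$, $n>m$. $\Theta_\rho(x,x)=0$ and for $x\ne y$, $\Theta_\rho(x,y)=\inf\sum_{i=0}^{k-1}\pi(c(x_i,x_{i+1}))$ over chains $x=x_0,\dots,x_k=y$ in $X$ with $x_i\ne x_{i+1}$. For $f:\mathcal S_k\to(0,\infty)$: $f$ is $(C,\pi)$-balanced if $f(u)/\pi(u)^p\le C^2f(v)/\pi(v)^p$ for all $u,v\in\mathcal S_k$ with $D_2(u,v)=1$. For $f_0:\mathcal S_k\to(0,\infty)$, $f_1:\mathcal S_{k+1}\to(0,\infty)$, the pair is $(C,\pi)$-compatible if $f_0(u)/\pi(u)^p\le f_1(v)/\pi(v)^p\le Cf_0(u)/\pi(u)^p$ whenever $u$ is the parent of $v$. A nonzero Borel measure $\mu$ is $p$-homogeneous on $(X,\Theta)$ if there is $C'$ with $\mu(B_\Theta(x,R))\le C'(R/r)^p\mu(B_\Theta(x,r))$ for all $x$, $0<r\le R$. Assouad dimension as usual: $\inf\{\beta:\exists C,\ N_r(B(x,R))\le C(R/r)^\beta\}$. *)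

theory Defs
  imports "HOL-Probability.Probability"
begin

definition Xball :: "'a::metric_space set \<Rightarrow> 'a \<Rightarrow> real \<Rightarrow> 'a set" where
  "Xball X x r = {y \<in> X. dist x y < r}"

definition doubling :: "'a::metric_space set \<Rightarrow> bool" where
  "doubling X \<longleftrightarrow> (\<exists>N::nat. \<forall>x\<in>X. \<forall>r>0. \<exists>F. finite F \<and> F \<subseteq> X \<and> card F \<le> N \<and>
       Xball X x (2 * r) \<subseteq> (\<Union>c\<in>F. Xball X c r))"

definition separated :: "'a::metric_space set \<Rightarrow> real \<Rightarrow> bool" where
  "separated A r \<longleftrightarrow> (\<forall>x\<in>A. \<forall>y\<in>A. x \<noteq> y \<longrightarrow> r \<le> dist x y)"

definition maximal_separated :: "'a::metric_space set \<Rightarrow> 'a set \<Rightarrow> real \<Rightarrow> bool" where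
  "maximal_separated X A r \<longleftrightarrow> A \<subseteq> X \<and> separated A r \<and>
     (\<forall>B. A \<subseteq> B \<and> B \<subseteq> X \<and> separated B r \<longrightarrow> B = A)"

text \<open>Vertices are pairs (x,n); par is the fixed parent map.\<close>

definition hyperbolic_filling ::
  "'a::metric_space set \<Rightarrow> real \<Rightarrow> real \<Rightarrow> (nat \<Rightarrow> 'a set) \<Rightarrow> 'a \<Rightarrow> ('a \<times> nat \<Rightarrow> 'a \<times> nat) \<Rightarrow> bool" where
  "hyperbolic_filling X a lam Xs x0 par \<longleftrightarrow>
     lam \<le> a \<and> 6 \<le> lam \<and> Xs 0 = {x0} \<and> (\<forall>n. Xs n \<subseteq> Xs (Suc n)) \<and>
     (\<forall>n. maximal_separated X (Xs n) ((1/a) ^ n)) \<and>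
     (\<forall>n. \<forall>x\<in>Xs (Suc n). fst (par (x, Suc n)) \<in> Xs n \<and> snd (par (x, Suc n)) = n \<and>
          (\<forall>z\<in>Xs n. dist x (fst (par (x, Suc n))) \<le> dist x z))"

definition verts :: "(nat \<Rightarrow> 'a set) \<Rightarrow> ('a \<times> nat) set" where
  "verts Xs = {(x, n). x \<in> Xs n}"

definition level :: "(nat \<Rightarrow> 'a set) \<Rightarrow> nat \<Rightarrow> ('a \<times> nat) set" where
  "level Xs n = {(x, m). m = n \<and> x \<in> Xs n}"

definition piw :: "('a \<times> nat \<Rightarrow> 'a \<times> nat) \<Rightarrow> ('a \<times> nat \<Rightarrow> real) \<Rightarrow> 'a \<times> nat \<Rightarrow> real" where
  "piw par rho v = (\<Prod>i\<in>{0..snd v}. rho ((par ^^ i) v))"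

definition desc :: "(nat \<Rightarrow> 'a set) \<Rightarrow> ('a \<times> nat \<Rightarrow> 'a \<times> nat) \<Rightarrow> nat \<Rightarrow> 'a \<times> nat \<Rightarrow> ('a \<times> nat) set" where
  "desc Xs par n v = {w \<in> level Xs n. (par ^^ (n - snd v)) w = v}"

definition vball :: "'a::metric_space set \<Rightarrow> real \<Rightarrow> 'a \<times> nat \<Rightarrow> 'a set" where
  "vball X a v = Xball X (fst v) ((1/a) ^ snd v)"

definition hadj :: "'a::metric_space set \<Rightarrow> real \<Rightarrow> real \<Rightarrow> (nat \<Rightarrow> 'a set) \<Rightarrow> 'a \<times> nat \<Rightarrow> 'a \<times> nat \<Rightarrow> bool" where
  "hadj X a lam Xs u v \<longleftrightarrow> u \<in> verts Xs \<and> v \<in> verts Xs \<and> u \<noteq> v \<and> snd u = snd v \<and>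
     Xball X (fst u) (lam * (1/a) ^ snd u) \<inter> Xball X (fst v) (lam * (1/a) ^ snd v) \<noteq> {}"

text \<open>Edges of the graph (S, D_2); adj u v iff D_2(u,v) = 1.\<close>
definition adj :: "'a::metric_space set \<Rightarrow> real \<Rightarrow> real \<Rightarrow> (nat \<Rightarrow> 'a set) \<Rightarrow> ('a \<times> nat \<Rightarrow> 'a \<times> nat)
    \<Rightarrow> 'a \<times> nat \<Rightarrow> 'a \<times> nat \<Rightarrow> bool" where
  "adj X a lam Xs par u v \<longleftrightarrow> hadj X a lam Xs u v \<or>
     (u \<in> verts Xs \<and> v \<in> verts Xs \<and> ((0 < snd u \<and> par u = v) \<or> (0 < snd v \<and> par v = u)))"

definition gpath :: "(nat \<Rightarrow> 'a set) \<Rightarrow> ('a \<times> nat \<Rightarrow> 'a \<times> nat \<Rightarrow> bool) \<Rightarrow> ('a \<times> nat) list \<Rightarrow> bool" where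
  "gpath Xs E \<gamma> \<longleftrightarrow> \<gamma> \<noteq> [] \<and> set \<gamma> \<subseteq> verts Xs \<and> (\<forall>i. Suc i < length \<gamma> \<longrightarrow> E (\<gamma> ! i) (\<gamma> ! Suc i))"

definition Gamma :: "'a::metric_space set \<Rightarrow> real \<Rightarrow> real \<Rightarrow> (nat \<Rightarrow> 'a set) \<Rightarrow> ('a \<times> nat \<Rightarrow> 'a \<times> nat)
    \<Rightarrow> nat \<Rightarrow> 'a \<Rightarrow> 'a \<Rightarrow> ('a \<times> nat) list set" where
  "Gamma X a lam Xs par n x y = {\<gamma>. gpath Xs (adj X a lam Xs par) \<gamma> \<and>
     snd (hd \<gamma>) = n \<and> snd (last \<gamma>) = n \<and> x \<in> vball X a (hd \<gamma>) \<and> y \<in> vball X a (last \<gamma>)}"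

definition Lrho :: "('a \<times> nat \<Rightarrow> 'a \<times> nat) \<Rightarrow> ('a \<times> nat \<Rightarrow> real) \<Rightarrow> ('a \<times> nat) list \<Rightarrow> real" where
  "Lrho par rho \<gamma> = sum_list (map (piw par rho) \<gamma>)"

definition ctop :: "'a::metric_space set \<Rightarrow> real \<Rightarrow> (nat \<Rightarrow> 'a set) \<Rightarrow> 'a \<Rightarrow> 'a \<Rightarrow> nat" where
  "ctop X a Xs x y = (GREATEST n. \<exists>z\<in>Xs n. x \<in> Xball X z (2 * (1/a) ^ n) \<and> y \<in> Xball X z (2 * (1/a) ^ n))"

definition cset :: "'a::metric_space set \<Rightarrow> real \<Rightarrow> (nat \<Rightarrow> 'a set) \<Rightarrow> 'a \<Rightarrow> 'a \<Rightarrow> ('a \<times> nat) set" where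
  "cset X a Xs x y = {v \<in> verts Xs. snd v = ctop X a Xs x y \<and>
     x \<in> Xball X (fst v) (2 * (1/a) ^ snd v) \<and> y \<in> Xball X (fst v) (2 * (1/a) ^ snd v)}"

definition piC :: "'a::metric_space set \<Rightarrow> real \<Rightarrow> (nat \<Rightarrow> 'a set) \<Rightarrow> ('a \<times> nat \<Rightarrow> 'a \<times> nat)
    \<Rightarrow> ('a \<times> nat \<Rightarrow> real) \<Rightarrow> 'a \<Rightarrow> 'a \<Rightarrow> real" where
  "piC X a Xs par rho x y = Max (piw par rho ` cset X a Xs x y)"

definition Theta :: "'a::metric_space set \<Rightarrow> real \<Rightarrow> (nat \<Rightarrow> 'a set) \<Rightarrow> ('a \<times> nat \<Rightarrow> 'a \<times> nat)
    \<Rightarrow> ('a \<times> nat \<Rightarrow> real) \<Rightarrow> 'a \<Rightarrow> 'a \<Rightarrow> real" where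
  "Theta X a Xs par rho x y = (if x = y then 0 else
     Inf {(\<Sum>i<length xs - 1. piC X a Xs par rho (xs ! i) (xs ! Suc i)) | xs.
            2 \<le> length xs \<and> hd xs = x \<and> last xs = y \<and> set xs \<subseteq> X \<and>
            (\<forall>i. Suc i < length xs \<longrightarrow> xs ! i \<noteq> xs ! Suc i)})"

definition H1 :: "(nat \<Rightarrow> 'a set) \<Rightarrow> ('a \<times> nat \<Rightarrow> real) \<Rightarrow> real \<Rightarrow> real \<Rightarrow> bool" where
  "H1 Xs rho em ep \<longleftrightarrow> 0 < em \<and> ep < 1 \<and> (\<forall>v\<in>verts Xs. em \<le> rho v \<and> rho v \<le> ep)"

definition H2 :: "'a::metric_space set \<Rightarrow> real \<Rightarrow> real \<Rightarrow> (nat \<Rightarrow> 'a set) \<Rightarrow> ('a \<times> nat \<Rightarrow> 'a \<times> nat)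
    \<Rightarrow> ('a \<times> nat \<Rightarrow> real) \<Rightarrow> bool" where
  "H2 X a lam Xs par rho \<longleftrightarrow> (\<exists>K0. \<forall>u v. hadj X a lam Xs u v \<longrightarrow> piw par rho u \<le> K0 * piw par rho v)"

definition H3 :: "'a::metric_space set \<Rightarrow> real \<Rightarrow> real \<Rightarrow> (nat \<Rightarrow> 'a set) \<Rightarrow> ('a \<times> nat \<Rightarrow> 'a \<times> nat)
    \<Rightarrow> ('a \<times> nat \<Rightarrow> real) \<Rightarrow> bool" where
  "H3 X a lam Xs par rho \<longleftrightarrow> (\<exists>K1>0. \<forall>x\<in>X. \<forall>y\<in>X. x \<noteq> y \<longrightarrow>
     (\<exists>n0. \<forall>n\<ge>n0. \<forall>\<gamma>\<in>Gamma X a lam Xs par n x y.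
        piC X a Xs par rho x y / K1 \<le> Lrho par rho \<gamma>))"

definition H4 :: "(nat \<Rightarrow> 'a set) \<Rightarrow> ('a \<times> nat \<Rightarrow> 'a \<times> nat) \<Rightarrow> ('a \<times> nat \<Rightarrow> real) \<Rightarrow> real \<Rightarrow> bool" where
  "H4 Xs par rho p \<longleftrightarrow> (\<forall>m n v. v \<in> level Xs m \<and> m < n \<longrightarrow>
     (\<Sum>w\<in>desc Xs par n v. piw par rho w powr p) \<le> piw par rho v powr p)"

definition balanced :: "'a::metric_space set \<Rightarrow> real \<Rightarrow> real \<Rightarrow> (nat \<Rightarrow> 'a set) \<Rightarrow> ('a \<times> nat \<Rightarrow> 'a \<times> nat)
    \<Rightarrow> ('a \<times> nat \<Rightarrow> real) \<Rightarrow> real \<Rightarrow> real \<Rightarrow> nat \<Rightarrow> ('a \<times> nat \<Rightarrow> real) \<Rightarrow> bool" where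
  "balanced X a lam Xs par rho p C k f \<longleftrightarrow>
     (\<forall>u\<in>level Xs k. \<forall>v\<in>level Xs k. adj X a lam Xs par u v \<longrightarrow>
        f u / piw par rho u powr p \<le> C^2 * f v / piw par rho v powr p)"

definition compatible :: "(nat \<Rightarrow> 'a set) \<Rightarrow> ('a \<times> nat \<Rightarrow> 'a \<times> nat) \<Rightarrow> ('a \<times> nat \<Rightarrow> real) \<Rightarrow> real \<Rightarrow> real
    \<Rightarrow> nat \<Rightarrow> ('a \<times> nat \<Rightarrow> real) \<Rightarrow> ('a \<times> nat \<Rightarrow> real) \<Rightarrow> bool" where
  "compatible Xs par rho p C k f0 f1 \<longleftrightarrow>
     (\<forall>v\<in>level Xs (Suc k).
        f0 (par v) / piw par rho (par v) powr p \<le> f1 v / piw par rho v powr p \<and>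
        f1 v / piw par rho v powr p \<le> C * f0 (par v) / piw par rho (par v) powr p)"

definition tmu :: "('a::metric_space \<times> nat) set \<Rightarrow> ('a \<times> nat \<Rightarrow> real) \<Rightarrow> 'a measure" where
  "tmu S f = measure_of UNIV (sets borel) (\<lambda>A. \<Sum>u\<in>{u\<in>S. fst u \<in> A}. ennreal (f u))"

definition coupled :: "'a::metric_space measure \<Rightarrow> 'a measure \<Rightarrow> real \<Rightarrow> bool" where
  "coupled M1 M2 r \<longleftrightarrow> (\<exists>P :: ('a \<times> 'a) measure. prob_space P \<and> sets P = sets borel \<and>
     distr P borel fst = M1 \<and> distr P borel snd = M2 \<and>
     emeasure P {(x1, x2). r \<le> dist x1 x2} = 0)"

definition sub_weak_limit :: "(nat \<Rightarrow> 'a::metric_space measure) \<Rightarrow> 'a measure \<Rightarrow> bool" where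
  "sub_weak_limit M mu \<longleftrightarrow> sets mu = sets borel \<and> finite_measure mu \<and>
     (\<exists>s. strict_mono s \<and> (\<forall>g::'a \<Rightarrow> real. continuous_on UNIV g \<and> bounded (range g) \<longrightarrow>
        (\<lambda>j. integral\<^sup>L (M (s j)) g) \<longlonglongrightarrow> integral\<^sup>L mu g))"

definition Dball :: "'a set \<Rightarrow> ('a \<Rightarrow> 'a \<Rightarrow> real) \<Rightarrow> 'a \<Rightarrow> real \<Rightarrow> 'a set" where
  "Dball X D x r = {y \<in> X. D x y < r}"

definition p_homogeneous :: "'a set \<Rightarrow> ('a \<Rightarrow> 'a \<Rightarrow> real) \<Rightarrow> real \<Rightarrow> 'a measure \<Rightarrow> bool" where
  "p_homogeneous X D p mu \<longleftrightarrow> emeasure mu X \<noteq> 0 \<and>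
     (\<exists>C'. \<forall>x\<in>X. \<forall>r R. 0 < r \<and> r \<le> R \<longrightarrow>
        measure mu (Dball X D x R) \<le> C' * (R / r) powr p * measure mu (Dball X D x r))"

definition cover_num :: "'a set \<Rightarrow> ('a \<Rightarrow> 'a \<Rightarrow> real) \<Rightarrow> 'a set \<Rightarrow> real \<Rightarrow> enat" where
  "cover_num X D A r = (INF F\<in>{F. finite F \<and> F \<subseteq> X \<and> A \<subseteq> (\<Union>c\<in>F. Dball X D c r)}. enat (card F))"

definition assouad_dim :: "'a set \<Rightarrow> ('a \<Rightarrow> 'a \<Rightarrow> real) \<Rightarrow> ereal" where
  "assouad_dim X D = Inf {ereal \<beta> | \<beta>. \<exists>C. \<forall>x\<in>X. \<forall>r R. 0 < r \<and> r \<le> R \<longrightarrow>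
      ereal_of_enat (cover_num X D (Dball X D x R) r) \<le> ereal (C * (R / r) powr \<beta>)}"

end

(* For x in X let pnear x j be the weight \<pi> of a level-j vertex within distance a^-j of x.
   By (H1) and (H2) it decreases geometrically along the levels, but by at most a fixed factor
   from one level to the next. The distance \<Theta>(x,y) is comparable to pnear x at the level
   where x and y separate: the two-point chain bounds \<Theta> from above, and any chain becomes,
   after joining genealogies of deep vertices near consecutive points, a path of the filling to
   which (H3) applies, its length controlled by the geometric sums of \<pi> along genealogies.
   Hence \<Theta>-balls of radii r <= R are sandwiched between metric balls of radii ~a^-n and
   ~a^-m with m <= n and pnear x m / pnear x n bounded by a multiple of R / r.
   The couplings move mass by a summable amount, so the limit measure of a metric ball of radius
   ~a^-m is comparable to the masses mu_m of the vertices near x. Balance compares these masses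
   within a level, compatibility along genealogies compares them across levels by the p-th power
   of the ratio of weights; this is p-homogeneity, and the Assouad bound follows by packing. *)

theory Submission
  imports Defs
begin

definition chain_sum :: "('b \<Rightarrow> 'b \<Rightarrow> 'c::comm_monoid_add) \<Rightarrow> 'b list \<Rightarrow> 'c" where
  "chain_sum f xs = (\<Sum>i<length xs - 1. f (xs ! i) (xs ! Suc i))"

lemma chain_sum_Nil [simp]: "chain_sum f [] = 0"
  by (simp add: chain_sum_def)

lemma chain_sum_singleton [simp]: "chain_sum f [x] = 0"
  by (simp add: chain_sum_def)

lemma chain_sum_Cons_Cons [simp]: "chain_sum f (x # y # zs) = f x y + chain_sum f (y # zs)"
  unfolding chain_sum_def by (simp add: sum.lessThan_Suc_shift del: sum.lessThan_Suc)

lemma chain_sum_append: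
  assumes "xs \<noteq> []" "ys \<noteq> []" "last xs = hd ys"
  shows "chain_sum f (xs @ tl ys) = chain_sum f xs + chain_sum f ys"
  using assms
proof (induction xs rule: induct_list012)
  case (2 x) then show ?case by (cases ys) auto
next
  case (3 x y zs) then show ?case by (simp add: add.assoc)
qed simp

lemma chain_sum_rev: "chain_sum f (rev xs) = chain_sum (\<lambda>u v. f v u) xs"
proof (induction xs rule: induct_list012)
  case (3 x y zs)
  have "chain_sum f (rev (x # y # zs)) = chain_sum f (rev (y # zs) @ tl [y, x])" by simp
  also have "\<dots> = chain_sum f (rev (y # zs)) + f y x"
    by (subst chain_sum_append) (auto simp: last_rev)
  finally show ?case using 3 by (simp add: add.commute)
qed auto

lemma chain_sum_nonneg:
  "(\<And>u v. u \<in> set xs \<Longrightarrow> v \<in> set xs \<Longrightarrow> u \<noteq> v \<Longrightarrow> 0 \<le> f u v) \<Longrightarrow>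
   successively (\<noteq>) xs \<Longrightarrow> (0::real) \<le> chain_sum f xs"
  by (induction xs rule: induct_list012) auto

lemma member_le_chain_sum:
  fixes f :: "'b \<Rightarrow> 'b \<Rightarrow> nat"
  assumes "Suc i < length xs"
  shows "f (xs ! i) (xs ! Suc i) \<le> chain_sum f xs"
  unfolding chain_sum_def using assms
  by (intro member_le_sum[of i "{..<length xs - 1}" "\<lambda>i. f (xs ! i) (xs ! Suc i)"]) auto

lemma sum_list_remdups_adj_le:
  fixes f :: "'b \<Rightarrow> real"
  shows "(\<And>x. x \<in> set xs \<Longrightarrow> 0 \<le> f x) \<Longrightarrow>
    sum_list (map f (remdups_adj xs)) \<le> sum_list (map f xs)"
proof (induction xs rule: remdups_adj.induct)
  case (3 x y xs)
  show ?case
  proof (cases "x = y")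
    case True
    then have "sum_list (map f (remdups_adj (x # xs))) \<le> sum_list (map f (x # xs))"
      using 3 by auto
    then show ?thesis using True 3(3)[of y] by simp
  qed (use 3 in auto)
qed auto

definition mass :: "('a \<times> nat) set \<Rightarrow> ('a \<times> nat \<Rightarrow> real) \<Rightarrow> 'a set \<Rightarrow> real" where
  "mass S f A = (\<Sum>u\<in>{u\<in>S. fst u \<in> A}. f u)"

lemma mass_mono:
  assumes "finite S" "\<And>u. u \<in> S \<Longrightarrow> 0 \<le> f u" "A \<subseteq> B"
  shows "mass S f A \<le> mass S f B"
  unfolding mass_def using assms by (intro sum_mono2) auto

lemma mass_nonneg: "(\<And>u. u \<in> S \<Longrightarrow> 0 \<le> f u) \<Longrightarrow> 0 \<le> mass S f A"
  unfolding mass_def by (intro sum_nonneg) auto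

lemma sets_tmu [simp]: "sets (tmu S f) = sets borel"
  unfolding tmu_def using sets.sigma_sets_eq[of borel] by (simp add: sets_measure_of_conv)

lemma space_tmu [simp]: "space (tmu S f) = UNIV"
  unfolding tmu_def by simp

lemma emeasure_tmu:
  assumes fin: "finite S" and nn: "\<And>u. u \<in> S \<Longrightarrow> 0 \<le> f u" and A: "A \<in> sets borel"
  shows "emeasure (tmu S f) A = ennreal (mass S f A)"
proof -
  define \<nu> where "\<nu> = (\<lambda>A. \<Sum>u\<in>{u\<in>S. fst u \<in> A}. ennreal (f u))"
  have \<nu>_indicator: "\<nu> B = (\<Sum>u\<in>S. ennreal (f u) * indicator B (fst u))" for B
    unfolding \<nu>_def by (subst sum.inter_filter[OF fin]) (rule sum.cong, auto simp: indicator_def)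
  have "emeasure (measure_of UNIV (sets borel) \<nu>) A = \<nu> A"
  proof (rule emeasure_measure_of_sigma)
    show "sigma_algebra UNIV (sets borel)"
      using sets.sigma_algebra_axioms[of borel] by simp
    show "positive (sets borel) \<nu>" unfolding positive_def \<nu>_def by simp
    show "countably_additive (sets borel) \<nu>"
      unfolding countably_additive_def
    proof (intro allI impI)
      fix B :: "nat \<Rightarrow> 'a set" assume "range B \<subseteq> sets borel" "disjoint_family B"
      have "(\<Sum>i. \<nu> (B i)) = (\<Sum>u\<in>S. \<Sum>i. ennreal (f u) * indicator (B i) (fst u))"
        by (simp add: \<nu>_indicator suminf_sum)
      also have "\<dots> = \<nu> (\<Union>i. B i)"
        using suminf_indicator[OF \<open>disjoint_family B\<close>]
        by (simp add: \<nu>_indicator ennreal_suminf_cmult)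
      finally show "(\<Sum>i. \<nu> (B i)) = \<nu> (\<Union> (range B))" .
    qed
  qed (rule A)
  moreover have "\<nu> A = ennreal (mass S f A)"
    unfolding \<nu>_def mass_def by (intro sum_ennreal) (use nn in auto)
  ultimately show ?thesis unfolding tmu_def \<nu>_def by simp
qed

lemma measure_tmu:
  assumes "finite S" "\<And>u. u \<in> S \<Longrightarrow> 0 \<le> f u" "A \<in> sets borel"
  shows "measure (tmu S f) A = mass S f A"
  using emeasure_tmu[OF assms] mass_nonneg[of S f A] assms(2) by (simp add: measure_def)

lemma finite_measure_tmu:
  assumes "finite S" "\<And>u. u \<in> S \<Longrightarrow> 0 \<le> f u"
  shows "finite_measure (tmu S f)"
  by (rule finite_measureI) (simp add: emeasure_tmu[OF assms])

lemma coupling_transports_balls: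
  fixes P :: "('a::metric_space \<times> 'a) measure"
  assumes sets_P: "sets P = sets borel"
    and null: "emeasure P {(x1, x2). \<delta> \<le> dist x1 x2} = 0"
    and fg: "(f, g) = (fst, snd) \<or> (f, g) = (snd, fst)"
  shows "emeasure (distr P borel f) (ball c s) \<le> emeasure (distr P borel g) (ball c (s + \<delta>))"
proof -
  have space_P: "space P = UNIV" using sets_eq_imp_space_eq[OF sets_P] by simp
  have meas: "fst \<in> measurable P borel" "snd \<in> measurable P borel"
    by (subst measurable_cong_sets[OF sets_P refl], intro borel_measurable_continuous_onI continuous_intros)+
  then have fg_meas: "f \<in> measurable P borel" "g \<in> measurable P borel" using fg by auto
  define D where "D = {z::'a \<times> 'a. \<delta> \<le> dist (fst z) (snd z)}"
  have D0: "emeasure P D = 0" using null unfolding D_def by (simp add: case_prod_beta')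
  have "closed D" unfolding D_def by (intro closed_Collect_le continuous_intros)
  then have D_sets: "D \<in> sets P" using sets_P by simp
  have pre: "h -` A \<in> sets P" if "h \<in> measurable P borel" "A \<in> sets borel" for h A
    using measurable_sets[OF that] space_P by simp
  have "f -` ball c s \<subseteq> g -` ball c (s + \<delta>) \<union> D"
  proof
    fix z assume "z \<in> f -` ball c s"
    moreover have "dist c (g z) \<le> dist c (f z) + dist (f z) (g z)" by (rule dist_triangle)
    moreover have "dist (f z) (g z) = dist (fst z) (snd z)" using fg by (auto simp: dist_commute)
    ultimately show "z \<in> g -` ball c (s + \<delta>) \<union> D" unfolding D_def by auto
  qed
  then have "emeasure P (f -` ball c s) \<le> emeasure P (g -` ball c (s + \<delta>) \<union> D)"
    using pre[OF fg_meas(2)] D_sets by (intro emeasure_mono) auto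
  also have "\<dots> \<le> emeasure P (g -` ball c (s + \<delta>)) + emeasure P D"
    using pre[OF fg_meas(2)] D_sets by (intro emeasure_subadditive) auto
  finally show ?thesis
    using D0 fg_meas by (simp add: emeasure_distr space_P)
qed

lemma coupled_emeasure_ball_le:
  fixes M1 M2 :: "'a::metric_space measure"
  assumes "coupled M1 M2 \<delta>"
  shows "emeasure M1 (ball c s) \<le> emeasure M2 (ball c (s + \<delta>))"
    and "emeasure M2 (ball c s) \<le> emeasure M1 (ball c (s + \<delta>))"
  using assms coupling_transports_balls[of _ \<delta> fst snd c s] coupling_transports_balls[of _ \<delta> snd fst c s]
  unfolding coupled_def by auto

section \<open>Subsequential weak limits\<close>

lemma ramp_between_balls:
  fixes c :: "'a::metric_space"
  assumes "R1 < R2" and g_def: "g = (\<lambda>y. max 0 (min 1 ((R2 - dist c y) / (R2 - R1))))"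
  shows "continuous_on UNIV g" "\<And>y. \<bar>g y\<bar> \<le> 1" "bounded (range g)"
    "\<And>y. indicator (ball c R1) y \<le> g y" "\<And>y. g y \<le> indicator (ball c R2) y"
proof -
  show "continuous_on UNIV g" unfolding g_def using assms by (intro continuous_intros) auto
  show bound: "\<bar>g y\<bar> \<le> 1" for y unfolding g_def by auto
  then show "bounded (range g)" unfolding bounded_iff by auto
  show "indicator (ball c R1) y \<le> g y" for y
    using assms unfolding g_def by (auto simp: indicator_def field_simps)
  show "g y \<le> indicator (ball c R2) y" for y
    using assms unfolding g_def by (auto simp: indicator_def field_simps divide_le_0_iff)
qed

locale weak_limit_subseq =
  fixes M :: "nat \<Rightarrow> 'a::metric_space measure" and \<mu> :: "'a measure" and s :: "nat \<Rightarrow> nat"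
  assumes tendsto: "\<And>g::'a \<Rightarrow> real. continuous_on UNIV g \<Longrightarrow> bounded (range g) \<Longrightarrow>
        (\<lambda>j. integral\<^sup>L (M (s j)) g) \<longlonglongrightarrow> integral\<^sup>L \<mu> g"
    and sets_M: "\<And>k. sets (M k) = sets borel" and finite_M: "\<And>k. finite_measure (M k)"
    and sets_\<mu>: "sets \<mu> = sets borel" and finite_\<mu>: "finite_measure \<mu>"
begin

lemma space_M: "space (M k) = UNIV"
  using sets_eq_imp_space_eq[OF sets_M[of k]] by simp

lemma space_\<mu>: "space \<mu> = UNIV"
  using sets_eq_imp_space_eq[OF sets_\<mu>] by simp

lemma integrable_bounded_continuous:
  assumes "continuous_on UNIV g" "\<And>y. \<bar>g y\<bar> \<le> B"
  shows "integrable (M k) (g :: 'a \<Rightarrow> real)" "integrable \<mu> g"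
proof -
  have g: "g \<in> borel_measurable borel" by (rule borel_measurable_continuous_onI[OF assms(1)])
  show "integrable (M k) g"
    by (rule finite_measure.integrable_const_bound[OF finite_M, where B=B])
      (use assms g in \<open>auto simp: measurable_cong_sets[OF sets_M refl]\<close>)
  show "integrable \<mu> g"
    by (rule finite_measure.integrable_const_bound[OF finite_\<mu>, where B=B])
      (use assms g in \<open>auto simp: measurable_cong_sets[OF sets_\<mu> refl]\<close>)
qed

lemma integrable_indicator:
  "A \<in> sets borel \<Longrightarrow> integrable (M k) (indicator A :: 'a \<Rightarrow> real)"
  "A \<in> sets borel \<Longrightarrow> integrable \<mu> (indicator A :: 'a \<Rightarrow> real)"
  by (auto intro!: integrable_real_indicator simp: sets_M sets_\<mu> less_top[symmetric]
      finite_measure.emeasure_finite[OF finite_M] finite_measure.emeasure_finite[OF finite_\<mu>])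

lemma limit_ball_ge:
  assumes R: "R1 < R2" and ev: "\<And>j. j \<ge> J \<Longrightarrow> t \<le> measure (M (s j)) (ball c R1)"
  shows "t \<le> measure \<mu> (ball c R2)"
proof -
  define g where "g = (\<lambda>y. max 0 (min 1 ((R2 - dist c y) / (R2 - R1))))"
  note g = ramp_between_balls[OF R g_def]
  have "t \<le> integral\<^sup>L (M (s j)) g" if "j \<ge> J" for j
  proof -
    have "t \<le> integral\<^sup>L (M (s j)) (indicator (ball c R1))"
      using ev[OF that] by (simp add: space_M)
    also have "\<dots> \<le> integral\<^sup>L (M (s j)) g"
      by (rule integral_mono[OF integrable_indicator(1) integrable_bounded_continuous(1)[OF g(1,2)]])
        (auto intro: g(4))
    finally show ?thesis .
  qed
  then have "t \<le> integral\<^sup>L \<mu> g"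
    by (intro LIMSEQ_le_const[OF tendsto]) (use g in auto)
  also have "\<dots> \<le> integral\<^sup>L \<mu> (indicator (ball c R2))"
    by (rule integral_mono[OF integrable_bounded_continuous(2)[OF g(1,2)] integrable_indicator(2)])
      (auto intro: g(5))
  finally show ?thesis by (simp add: space_\<mu>)
qed

lemma limit_ball_le:
  assumes R: "R1 < R2" and ev: "\<And>j. j \<ge> J \<Longrightarrow> measure (M (s j)) (ball c R2) \<le> t"
  shows "measure \<mu> (ball c R1) \<le> t"
proof -
  define g where "g = (\<lambda>y. max 0 (min 1 ((R2 - dist c y) / (R2 - R1))))"
  note g = ramp_between_balls[OF R g_def]
  have "integral\<^sup>L (M (s j)) g \<le> t" if "j \<ge> J" for j
  proof -
    have "integral\<^sup>L (M (s j)) g \<le> integral\<^sup>L (M (s j)) (indicator (ball c R2))"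
      by (rule integral_mono[OF integrable_bounded_continuous(1)[OF g(1,2)] integrable_indicator(1)])
        (auto intro: g(5))
    then show ?thesis using ev[OF that] by (simp add: space_M)
  qed
  then have "integral\<^sup>L \<mu> g \<le> t"
    by (intro LIMSEQ_le_const2[OF tendsto]) (use g in auto)
  moreover have "integral\<^sup>L \<mu> (indicator (ball c R1)) \<le> integral\<^sup>L \<mu> g"
    by (rule integral_mono[OF integrable_indicator(2) integrable_bounded_continuous(2)[OF g(1,2)]])
      (auto intro: g(4))
  ultimately show ?thesis by (simp add: space_\<mu>)
qed

lemma limit_measure_UNIV:
  assumes "\<And>k. measure (M k) UNIV = 1"
  shows "measure \<mu> UNIV = 1"
proof -
  have "(\<lambda>j. integral\<^sup>L (M (s j)) (\<lambda>_. 1::real)) \<longlonglongrightarrow> integral\<^sup>L \<mu> (\<lambda>_. 1)"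
    by (intro tendsto) (auto simp: bounded_iff)
  then show ?thesis using assms by (simp add: space_M space_\<mu> LIMSEQ_const_iff)
qed

lemma limit_null_outside_closed:
  assumes X: "closed X" "X \<noteq> {}" and null: "\<And>k. measure (M k) (- X) = 0"
  shows "emeasure \<mu> (- X) = 0"
proof -
  define g where "g \<equiv> \<lambda>y. min 1 (infdist y X)"
  have g_cont: "continuous_on UNIV g" unfolding g_def by (intro continuous_intros)
  have g_bound: "\<bar>g y\<bar> \<le> 1" for y unfolding g_def using infdist_nonneg[of y X] by auto
  have g_nonneg: "0 \<le> g y" for y unfolding g_def using infdist_nonneg[of y X] by auto
  have g_zero_iff: "g y = 0 \<longleftrightarrow> y \<in> X" for y
    using in_closed_iff_infdist_zero[OF X, of y] infdist_nonneg[of y X] unfolding g_def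
    by (auto simp: min_def)
  have "integral\<^sup>L (M k) g = 0" for k
  proof -
    have "integral\<^sup>L (M k) g \<le> integral\<^sup>L (M k) (indicator (- X))"
      using g_zero_iff[THEN iffD2] g_bound
      by (intro integral_mono[OF integrable_bounded_continuous(1)[OF g_cont g_bound]
            integrable_indicator(1)]) (auto simp: X indicator_def abs_le_iff)
    also have "\<dots> = 0" using null by (simp add: space_M)
    finally show ?thesis using g_nonneg by (simp add: Bochner_Integration.integral_nonneg order_antisym)
  qed
  then have "(\<lambda>j. 0) \<longlonglongrightarrow> integral\<^sup>L \<mu> g"
    using tendsto[of g] g_cont g_bound by (auto simp: bounded_iff)
  then have "integral\<^sup>L \<mu> g = 0" using LIMSEQ_unique tendsto_const by blast
  then have "AE y in \<mu>. g y = 0"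
    using integral_nonneg_eq_0_iff_AE[of \<mu> g] integrable_bounded_continuous(2)[OF g_cont g_bound]
      g_nonneg by auto
  moreover have "{y \<in> space \<mu>. g y \<noteq> 0} = - X" using g_zero_iff by (auto simp: space_\<mu>)
  ultimately show ?thesis
    using AE_iff_measurable[of "- X" \<mu> "\<lambda>y. g y = 0"] X sets_\<mu> by auto
qed

end

lemma doubling_cover_iterate:
  assumes doubling: "\<And>x r. x \<in> X \<Longrightarrow> 0 < r \<Longrightarrow>
      \<exists>F. finite F \<and> F \<subseteq> X \<and> card F \<le> N \<and> Xball X x (2 * r) \<subseteq> (\<Union>c\<in>F. Xball X c r)"
    and "x \<in> X" "0 < r"
  shows "\<exists>F. finite F \<and> F \<subseteq> X \<and> card F \<le> N ^ k \<and> Xball X x (2 ^ k * r) \<subseteq> (\<Union>c\<in>F. Xball X c r)"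
  using assms(3)
proof (induction k arbitrary: r)
  case 0
  then show ?case using assms(2) by (intro exI[of _ "{x}"]) auto
next
  case (Suc k)
  obtain F where F: "finite F" "F \<subseteq> X" "card F \<le> N ^ k"
      "Xball X x (2 ^ k * (2 * r)) \<subseteq> (\<Union>c\<in>F. Xball X c (2 * r))"
    using Suc.IH[of "2 * r"] Suc.prems by auto
  have "\<forall>c\<in>F. \<exists>G. finite G \<and> G \<subseteq> X \<and> card G \<le> N \<and> Xball X c (2 * r) \<subseteq> (\<Union>g\<in>G. Xball X g r)"
    using doubling F(2) Suc.prems by blast
  then obtain G where G: "\<And>c. c \<in> F \<Longrightarrow>
      finite (G c) \<and> G c \<subseteq> X \<and> card (G c) \<le> N \<and> Xball X c (2 * r) \<subseteq> (\<Union>g\<in>G c. Xball X g r)"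
    by metis
  have "card (\<Union>c\<in>F. G c) \<le> (\<Sum>c\<in>F. card (G c))" by (rule card_UN_le[OF F(1)])
  also have "\<dots> \<le> card F * N" using G sum_bounded_above[of F "\<lambda>c. card (G c)" N] by auto
  also have "\<dots> \<le> N ^ Suc k" using F(3) by (simp add: mult.commute)
  finally have "card (\<Union>c\<in>F. G c) \<le> N ^ Suc k" .
  moreover have "Xball X x (2 ^ Suc k * r) \<subseteq> (\<Union>c\<in>(\<Union>c\<in>F. G c). Xball X c r)"
  proof
    fix z assume "z \<in> Xball X x (2 ^ Suc k * r)"
    moreover have "2 ^ Suc k * r = 2 ^ k * (2 * r)" by simp
    ultimately have "z \<in> Xball X x (2 ^ k * (2 * r))" by metis
    then obtain c where c: "c \<in> F" "z \<in> Xball X c (2 * r)" using F(4) by blast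
    then obtain g where "g \<in> G c" "z \<in> Xball X g r" using G[OF c(1)] by blast
    then show "z \<in> (\<Union>c\<in>(\<Union>c\<in>F. G c). Xball X c r)" using c(1) by blast
  qed
  moreover have "finite (\<Union>c\<in>F. G c)" "(\<Union>c\<in>F. G c) \<subseteq> X" using F(1) G by auto
  ultimately show ?case by meson
qed

lemma doubling_card_separated_bounded:
  assumes "doubling X"
  shows "\<exists>N::nat. \<forall>x\<in>X. \<forall>r>0. \<forall>S. S \<subseteq> Xball X x (8 * r) \<longrightarrow> separated S r \<longrightarrow> card S \<le> N"
proof -
  obtain N where N: "\<forall>x\<in>X. \<forall>r>0.
      \<exists>F. finite F \<and> F \<subseteq> X \<and> card F \<le> N \<and> Xball X x (2 * r) \<subseteq> (\<Union>c\<in>F. Xball X c r)"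
    using assms unfolding doubling_def by blast
  show ?thesis
  proof (intro exI[of _ "N ^ 4"] ballI allI impI)
    fix x r S assume x: "x \<in> X" and r: "0 < r" and S: "S \<subseteq> Xball X x (8 * r)" "separated S r"
    have "(2::real) ^ 4 * (r/2) = 8 * r" by simp
    then obtain F where F: "finite F" "card F \<le> N ^ 4" "Xball X x (8 * r) \<subseteq> (\<Union>c\<in>F. Xball X c (r/2))"
      using doubling_cover_iterate[OF N[rule_format] x, of "r/2" 4] r by (metis half_gt_zero)
    \<comment> \<open>each ball of radius \<open>r/2\<close> contains at most one point of \<open>S\<close>\<close>
    define f where "f s = (SOME c. c \<in> F \<and> s \<in> Xball X c (r/2))" for s
    have ex: "\<exists>c. c \<in> F \<and> s \<in> Xball X c (r/2)" if "s \<in> S" for s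
      using that S(1) F(3) by blast
    have f: "f s \<in> F \<and> s \<in> Xball X (f s) (r/2)" if "s \<in> S" for s
      unfolding f_def using ex[OF that] by (rule someI_ex)
    have "inj_on f S"
    proof (rule inj_onI)
      fix s1 s2 assume s: "s1 \<in> S" "s2 \<in> S" "f s1 = f s2"
      have "dist (f s1) s1 < r/2" "dist (f s1) s2 < r/2"
        using f[OF s(1)] f[OF s(2)] s(3) by (auto simp: Xball_def)
      moreover have "dist s1 s2 \<le> dist (f s1) s1 + dist (f s1) s2" by (metis dist_commute dist_triangle)
      ultimately have "dist s1 s2 < r" by linarith
      then show "s1 = s2" using S(2) s(1,2) unfolding separated_def by force
    qed
    then have "card S \<le> card F" using f F(1) by (intro card_inj_on_le) auto
    then show "card S \<le> N ^ 4" using F(2) by simp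
  qed
qed

section \<open>Homogeneous measures bound the Assouad dimension\<close>

locale homogeneous_measure =
  fixes X :: "'a set" and D :: "'a \<Rightarrow> 'a \<Rightarrow> real" and M :: "'a measure" and p c :: real
  assumes finite_M: "finite_measure M"
    and Dball_sets: "\<And>x r. x \<in> X \<Longrightarrow> Dball X D x r \<in> sets M"
    and D_self: "\<And>x. x \<in> X \<Longrightarrow> D x x = 0"
    and D_sym: "\<And>x y. x \<in> X \<Longrightarrow> y \<in> X \<Longrightarrow> D x y = D y x"
    and D_triangle: "\<And>x y z. x \<in> X \<Longrightarrow> y \<in> X \<Longrightarrow> z \<in> X \<Longrightarrow> D x z \<le> D x y + D y z"
    and Dball_pos: "\<And>x r. x \<in> X \<Longrightarrow> 0 < r \<Longrightarrow> 0 < measure M (Dball X D x r)"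
    and homogeneous: "\<And>x r R. x \<in> X \<Longrightarrow> 0 < r \<Longrightarrow> r \<le> R \<Longrightarrow>
      measure M (Dball X D x R) \<le> c * (R / r) powr p * measure M (Dball X D x r)"
begin

lemma const_pos: "x \<in> X \<Longrightarrow> 0 < c"
  using Dball_pos[of x 1] homogeneous[of x 1 1] by (simp add: zero_less_mult_iff)

lemma Dball_subset_Dball:
  assumes "x \<in> X" "y \<in> X" "D x y < s" shows "Dball X D y t \<subseteq> Dball X D x (s + t)"
proof
  fix z assume "z \<in> Dball X D y t"
  then have "z \<in> X" "D y z < t" unfolding Dball_def by auto
  then show "z \<in> Dball X D x (s + t)" using D_triangle[OF assms(1,2), of z] assms(3) unfolding Dball_def by auto
qed

lemma disjoint_family_on_Dball:
  assumes F: "F \<subseteq> X" "\<And>f g. f \<in> F \<Longrightarrow> g \<in> F \<Longrightarrow> f \<noteq> g \<Longrightarrow> r \<le> D f g"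
  shows "disjoint_family_on (\<lambda>f. Dball X D f (r/2)) F"
  unfolding disjoint_family_on_def
proof (intro ballI impI)
  fix f g assume fg: "f \<in> F" "g \<in> F" "f \<noteq> g"
  show "Dball X D f (r/2) \<inter> Dball X D g (r/2) = {}"
  proof (rule ccontr)
    assume "Dball X D f (r/2) \<inter> Dball X D g (r/2) \<noteq> {}"
    then obtain z where z: "z \<in> X" "D f z < r/2" "D g z < r/2" unfolding Dball_def by auto
    have "f \<in> X" "g \<in> X" using fg F(1) by auto
    then have "D f g < r" using z D_triangle[of f z g] D_sym[of z g] by auto
    then show False using F(2)[OF fg] by simp
  qed
qed

lemma measure_Dball_le_small_Dball:
  assumes x: "x \<in> X" and f: "f \<in> Dball X D x R" and r: "0 < r" "r \<le> R"
  shows "measure M (Dball X D x R) \<le> c * (4 * (R / r)) powr p * measure M (Dball X D f (r/2))"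
proof -
  interpret finite_measure M by (rule finite_M)
  have fX: "f \<in> X" and "D f x < R" using f D_sym[OF x] unfolding Dball_def by auto
  then have "Dball X D x R \<subseteq> Dball X D f (R + R)" by (rule Dball_subset_Dball[OF _ x])
  then have "measure M (Dball X D x R) \<le> measure M (Dball X D f (2 * R))"
    using Dball_sets[OF fX] by (intro finite_measure_mono) (simp_all only: mult_2)
  also have "\<dots> \<le> c * ((2 * R) / (r/2)) powr p * measure M (Dball X D f (r/2))"
    using r by (intro homogeneous[OF fX]) auto
  finally show ?thesis by simp
qed

lemma card_separated_le:
  assumes x: "x \<in> X" and r: "0 < r" "r \<le> R"
    and F: "finite F" "F \<subseteq> Dball X D x R" "\<And>f g. f \<in> F \<Longrightarrow> g \<in> F \<Longrightarrow> f \<noteq> g \<Longrightarrow> r \<le> D f g"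
  shows "real (card F) \<le> c\<^sup>2 * 8 powr p * (R / r) powr p"
proof -
  interpret finite_measure M by (rule finite_M)
  have F_X: "F \<subseteq> X" using F(2) unfolding Dball_def by auto
  define mB where "mB = measure M (Dball X D x R)"
  have mB_pos: "0 < mB" unfolding mB_def using Dball_pos[OF x] r by simp
  define s where "s = c * (4 * (R / r)) powr p"
  have s_pos: "0 < s" unfolding s_def using const_pos[OF x] r by simp
  have "real (card F) * (mB / s) = (\<Sum>f\<in>F. mB / s)" by simp
  also have "\<dots> \<le> (\<Sum>f\<in>F. measure M (Dball X D f (r/2)))"
    using measure_Dball_le_small_Dball[OF x subsetD[OF F(2)] r] s_pos
    by (intro sum_mono) (simp add: s_def mB_def divide_le_eq mult.commute)
  also have "\<dots> = measure M (\<Union>f\<in>F. Dball X D f (r/2))"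
    using F(1) disjoint_family_on_Dball[OF F_X F(3)] Dball_sets F_X
    by (intro finite_measure_finite_Union[symmetric]) auto
  also have "\<dots> \<le> measure M (Dball X D x (R + R))"
  proof (intro finite_measure_mono Dball_sets[OF x] UN_least)
    fix f assume "f \<in> F"
    then have "f \<in> X" "D x f < R" using F(2) unfolding Dball_def by auto
    then have "Dball X D f (r/2) \<subseteq> Dball X D x (R + r/2)" by (rule Dball_subset_Dball[OF x])
    also have "\<dots> \<subseteq> Dball X D x (R + R)" using r unfolding Dball_def by auto
    finally show "Dball X D f (r/2) \<subseteq> Dball X D x (R + R)" .
  qed
  also have "\<dots> \<le> c * 2 powr p * mB"
    unfolding mB_def using homogeneous[OF x, of R "R + R"] r by (simp add: mult_2[symmetric])
  finally have "real (card F) \<le> c * 2 powr p * s"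
    using mB_pos s_pos by (simp add: field_simps)
  also have "\<dots> = c\<^sup>2 * (2 powr p * 4 powr p) * (R / r) powr p"
    unfolding s_def power2_eq_square by (subst powr_mult) (simp add: mult_ac)
  also have "2 powr p * 4 powr p = 8 powr p"
    by (simp add: powr_mult[symmetric])
  finally show ?thesis .
qed

text \<open>A maximal \<open>r\<close>-separated subset of a ball, which exists by \<open>card_separated_le\<close>, is an
  \<open>r\<close>-net of it.\<close>
lemma separated_net_exists:
  assumes x: "x \<in> X" and r: "0 < r" "r \<le> R"
  defines "B \<equiv> Dball X D x R"
  shows "\<exists>F. finite F \<and> F \<subseteq> B \<and> (\<forall>f\<in>F. \<forall>g\<in>F. f \<noteq> g \<longrightarrow> r \<le> D f g) \<and> B \<subseteq> (\<Union>f\<in>F. Dball X D f r)"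
proof -
  define separated_of_card where "separated_of_card n \<longleftrightarrow>
    (\<exists>F. finite F \<and> F \<subseteq> B \<and> (\<forall>f\<in>F. \<forall>g\<in>F. f \<noteq> g \<longrightarrow> r \<le> D f g) \<and> card F = n)" for n
  have bounded: "\<forall>n. separated_of_card n \<longrightarrow> n \<le> nat \<lceil>c\<^sup>2 * 8 powr p * (R / r) powr p\<rceil>"
  proof (intro allI impI)
    fix n assume "separated_of_card n"
    then obtain F where F: "finite F" "F \<subseteq> B" "\<forall>f\<in>F. \<forall>g\<in>F. f \<noteq> g \<longrightarrow> r \<le> D f g" "card F = n"
      unfolding separated_of_card_def by blast
    then have "real n \<le> c\<^sup>2 * 8 powr p * (R / r) powr p"
      using card_separated_le[OF x r F(1) F(2)[unfolded B_def] F(3)[rule_format]] by simp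
    then show "n \<le> nat \<lceil>c\<^sup>2 * 8 powr p * (R / r) powr p\<rceil>" by linarith
  qed
  have "separated_of_card 0"
    unfolding separated_of_card_def by (intro exI[of _ "{}"]) auto
  then obtain n where n: "separated_of_card n" "\<And>m. separated_of_card m \<Longrightarrow> m \<le> n"
    using Nat.ex_has_greatest_nat[of separated_of_card 0, OF _ bounded] by auto
  then obtain F where F: "finite F" "F \<subseteq> B" "\<forall>f\<in>F. \<forall>g\<in>F. f \<noteq> g \<longrightarrow> r \<le> D f g" "card F = n"
    unfolding separated_of_card_def by blast
  have F_X: "F \<subseteq> X" using F(2) unfolding B_def Dball_def by auto
  have "B \<subseteq> (\<Union>f\<in>F. Dball X D f r)"
  proof
    fix y assume y: "y \<in> B"
    show "y \<in> (\<Union>f\<in>F. Dball X D f r)"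
    proof (rule ccontr)
      assume far: "y \<notin> (\<Union>f\<in>F. Dball X D f r)"
      have yX: "y \<in> X" using y unfolding B_def Dball_def by auto
      then have "y \<notin> F" using far r D_self unfolding Dball_def by auto
      moreover have "r \<le> D f y" "r \<le> D y f" if "f \<in> F" for f
        using far that yX D_sym[OF subsetD[OF F_X that] yX] unfolding Dball_def by (auto simp: not_less)
      ultimately have "separated_of_card (Suc n)"
        unfolding separated_of_card_def using F y
        by (intro exI[of _ "insert y F"]) auto
      then show False using n(2) by (metis Suc_n_not_le_n)
    qed
  qed
  then show ?thesis using F by blast
qed

lemma cover_num_le:
  assumes x: "x \<in> X" and r: "0 < r" "r \<le> R"
  shows "ereal_of_enat (cover_num X D (Dball X D x R) r) \<le> ereal (c\<^sup>2 * 8 powr p * (R / r) powr p)"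
proof -
  obtain F where F: "finite F" "F \<subseteq> Dball X D x R" "\<forall>f\<in>F. \<forall>g\<in>F. f \<noteq> g \<longrightarrow> r \<le> D f g"
      "Dball X D x R \<subseteq> (\<Union>f\<in>F. Dball X D f r)"
    using separated_net_exists[OF x r] by blast
  have "F \<subseteq> X" using F(2) unfolding Dball_def by auto
  then have "cover_num X D (Dball X D x R) r \<le> enat (card F)"
    unfolding cover_num_def using F(1,4) by (intro INF_lower) auto
  then have "ereal_of_enat (cover_num X D (Dball X D x R) r) \<le> ereal_of_enat (enat (card F))"
    by (simp only: ereal_of_enat_le_iff)
  also have "\<dots> \<le> ereal (c\<^sup>2 * 8 powr p * (R / r) powr p)"
    using card_separated_le[OF x r F(1,2) F(3)[rule_format]] by simp
  finally show ?thesis .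
qed

lemma assouad_dim_le: "assouad_dim X D \<le> ereal p"
  unfolding assouad_dim_def using cover_num_le by (intro Inf_lower) blast

end

section \<open>Geometry of the hyperbolic filling\<close>

locale filling_space =
  fixes X :: "'a::metric_space set" and a lam :: real and Xs :: "nat \<Rightarrow> 'a set" and x0 :: 'a
    and par :: "'a \<times> nat \<Rightarrow> 'a \<times> nat"
  assumes compact_X: "compact X" and diameter_X: "diameter X = 1/2"
    and filling: "hyperbolic_filling X a lam Xs x0 par"
begin

lemma filling_facts: "lam \<le> a" "6 \<le> lam" "Xs 0 = {x0}"
    "\<And>n. maximal_separated X (Xs n) ((1/a) ^ n)"
    "\<And>n x. x \<in> Xs (Suc n) \<Longrightarrow> fst (par (x, Suc n)) \<in> Xs n \<and> snd (par (x, Suc n)) = n \<and>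
          (\<forall>z\<in>Xs n. dist x (fst (par (x, Suc n))) \<le> dist x z)"
  using filling unfolding hyperbolic_filling_def by auto

lemma a_ge_6: "6 \<le> a"
  using filling_facts by linarith

lemma scale_pos: "0 < (1/a) ^ k"
  using a_ge_6 by simp

lemma scale_lt_1: "1/a < 1"
  using a_ge_6 by simp

lemma scale_Suc_le: "(1/a) ^ Suc k \<le> (1/6) * (1/a) ^ k"
  using a_ge_6 scale_pos[of k] by (simp add: field_simps)

lemma scale_antimono: "j \<le> k \<Longrightarrow> (1/a) ^ k \<le> (1/a) ^ j"
  using a_ge_6 by (intro power_decreasing) auto

lemma Xs_subset: "Xs n \<subseteq> X"
  using filling_facts(4)[of n] unfolding maximal_separated_def by auto

lemma Xs_separated: "separated (Xs n) ((1/a) ^ n)"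
  using filling_facts(4)[of n] unfolding maximal_separated_def by auto

lemma x0_in_X: "x0 \<in> X"
  using Xs_subset[of 0] filling_facts(3) by auto

lemma closed_X: "closed X"
  using compact_X by (rule compact_imp_closed)

lemma dist_le_half: "x \<in> X \<Longrightarrow> y \<in> X \<Longrightarrow> dist x y \<le> 1/2"
  using diameter_bounded_bound[OF compact_imp_bounded[OF compact_X]] diameter_X by metis

text \<open>A separated subset of a compact set has no accumulation point.\<close>
lemma finite_Xs: "finite (Xs n)"
proof -
  have "\<not> z islimpt (Xs n)" for z
  proof
    assume "z islimpt (Xs n)"
    then have inf: "infinite (Xs n \<inter> ball z ((1/a)^n/2))"
      using islimpt_eq_infinite_ball scale_pos by (metis half_gt_zero)
    then obtain u where u: "u \<in> Xs n \<inter> ball z ((1/a)^n/2)" by (metis finite.emptyI ex_in_conv)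
    have "infinite ((Xs n \<inter> ball z ((1/a)^n/2)) - {u})" using inf by simp
    then obtain v where v: "v \<in> (Xs n \<inter> ball z ((1/a)^n/2)) - {u}" by (metis finite.emptyI ex_in_conv)
    have "dist u v \<le> dist z u + dist z v" by (metis dist_commute dist_triangle)
    then have "dist u v < (1/a)^n" using u v by auto
    moreover have "(1/a)^n \<le> dist u v" using Xs_separated[of n] u v unfolding separated_def by auto
    ultimately show False by simp
  qed
  then have "finite (X \<inter> Xs n)" by (intro finite_not_islimpt_in_compact[OF compact_X]) auto
  moreover have "X \<inter> Xs n = Xs n" using Xs_subset by auto
  ultimately show ?thesis by simp
qed

lemma Xs_dense:
  assumes "x \<in> X" shows "\<exists>z\<in>Xs n. dist x z < (1/a)^n"
proof (cases "x \<in> Xs n")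
  case True then show ?thesis using scale_pos[of n] by force
next
  case False
  have "\<not> separated (insert x (Xs n)) ((1/a)^n)"
    using filling_facts(4)[of n] False assms unfolding maximal_separated_def
    by (metis insert_subset subset_insertI insertI1)
  then obtain u v where uv: "u \<in> insert x (Xs n)" "v \<in> insert x (Xs n)" "u \<noteq> v" "dist u v < (1/a)^n"
    unfolding separated_def by (auto simp: not_le)
  moreover have "\<not> (u \<in> Xs n \<and> v \<in> Xs n)"
    using uv Xs_separated[of n] unfolding separated_def by (meson not_le)
  ultimately show ?thesis by (auto simp: dist_commute)
qed

lemma level_iff: "v \<in> level Xs k \<longleftrightarrow> snd v = k \<and> fst v \<in> Xs k"
  unfolding level_def by (cases v) auto

lemma verts_iff: "v \<in> verts Xs \<longleftrightarrow> fst v \<in> Xs (snd v)"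
  unfolding verts_def by (cases v) auto

lemma level_in_verts: "v \<in> level Xs k \<Longrightarrow> v \<in> verts Xs"
  by (simp add: level_iff verts_iff)

lemma finite_level: "finite (level Xs k)"
proof -
  have "level Xs k = (\<lambda>x. (x, k)) ` Xs k" unfolding level_def by auto
  then show ?thesis using finite_Xs by simp
qed

lemma level_fst_in_X: "v \<in> level Xs k \<Longrightarrow> fst v \<in> X"
  using Xs_subset by (auto simp: level_iff)

lemma level_0: "level Xs 0 = {(x0, 0)}"
  using filling_facts(3) unfolding level_def by auto

lemma parent_level_dist:
  assumes "v \<in> level Xs (Suc k)"
  shows "par v \<in> level Xs k" "dist (fst v) (fst (par v)) < (1/a)^k"
proof -
  obtain x where v: "v = (x, Suc k)" "x \<in> Xs (Suc k)" using assms by (cases v) (auto simp: level_iff)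
  note parent = filling_facts(5)[OF v(2)]
  show "par v \<in> level Xs k" using parent v by (auto simp: level_iff)
  obtain z where z: "z \<in> Xs k" "dist x z < (1/a)^k" using Xs_dense[of x k] v Xs_subset by auto
  show "dist (fst v) (fst (par v)) < (1/a)^k" using parent z v by force
qed

lemma ancestor_level_dist:
  assumes "v \<in> level Xs k" "i \<le> k"
  shows "(par ^^ i) v \<in> level Xs (k - i)"
    and "dist (fst v) (fst ((par ^^ i) v)) \<le> (6/5) * (1/a)^(k - i)"
proof -
  have "(par ^^ i) v \<in> level Xs (k - i) \<and> dist (fst v) (fst ((par ^^ i) v)) \<le> (6/5) * (1/a)^(k - i)"
    using assms(2)
  proof (induction i)
    case 0 then show ?case using assms(1) scale_pos[of k] by simp
  next
    case (Suc i)
    then have IH: "(par ^^ i) v \<in> level Xs (Suc (k - Suc i))"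
        "dist (fst v) (fst ((par ^^ i) v)) \<le> (6/5) * (1/a)^(Suc (k - Suc i))"
      by (simp_all add: Suc_diff_Suc)
    note parent = parent_level_dist[OF IH(1)]
    have "dist (fst v) (fst ((par ^^ Suc i) v))
        \<le> dist (fst v) (fst ((par ^^ i) v)) + dist (fst ((par ^^ i) v)) (fst ((par ^^ Suc i) v))"
      by (rule dist_triangle)
    also have "\<dots> \<le> (6/5) * (1/a)^(Suc (k - Suc i)) + (1/a)^(k - Suc i)"
      using IH(2) parent(2) by simp
    also have "\<dots> \<le> (6/5) * (1/a)^(k - Suc i)"
      using scale_Suc_le[of "k - Suc i"] by linarith
    finally show ?case using parent(1) by simp
  qed
  then show "(par ^^ i) v \<in> level Xs (k - i)"
    and "dist (fst v) (fst ((par ^^ i) v)) \<le> (6/5) * (1/a)^(k - i)" by auto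
qed

lemma hadj_sym: "hadj X a lam Xs u v \<Longrightarrow> hadj X a lam Xs v u"
  unfolding hadj_def by auto

lemma adj_sym: "adj X a lam Xs par u v \<Longrightarrow> adj X a lam Xs par v u"
  unfolding adj_def using hadj_sym by blast

lemma near_vertices_hadj:
  assumes "u \<in> level Xs k" "v \<in> level Xs k" "x \<in> X"
    "dist (fst u) x < 6 * (1/a)^k" "dist (fst v) x < 6 * (1/a)^k"
  shows "u = v \<or> hadj X a lam Xs u v"
proof -
  have "6 * (1/a)^k \<le> lam * (1/a)^k"
    using filling_facts(2) scale_pos[of k] by (simp add: mult_right_mono)
  then have "x \<in> Xball X (fst u) (lam * (1/a) ^ snd u) \<inter> Xball X (fst v) (lam * (1/a) ^ snd v)"
    using assms by (auto simp: Xball_def level_iff)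
  then show ?thesis using assms(1,2) level_in_verts unfolding hadj_def by (auto simp: level_iff)
qed

definition vnear :: "'a \<Rightarrow> nat \<Rightarrow> 'a \<times> nat" where
  "vnear x j = (SOME v. v \<in> level Xs j \<and> dist (fst v) x < (1/a)^j)"

lemma vnear:
  assumes "x \<in> X" shows "vnear x j \<in> level Xs j" "dist (fst (vnear x j)) x < (1/a)^j"
proof -
  obtain z where "z \<in> Xs j" "dist x z < (1/a)^j" using Xs_dense[OF assms] by blast
  then have "\<exists>v. v \<in> level Xs j \<and> dist (fst v) x < (1/a)^j"
    by (intro exI[of _ "(z, j)"]) (auto simp: level_iff dist_commute)
  then show "vnear x j \<in> level Xs j" "dist (fst (vnear x j)) x < (1/a)^j"
    unfolding vnear_def by (metis (mono_tags, lifting) someI_ex)+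
qed

lemma dist_ancestor_point:
  assumes "x \<in> X" "w \<in> level Xs k" "dist (fst w) x < c * (1/a)^k" "j \<le> k" "0 \<le> c"
  shows "dist (fst ((par ^^ (k - j)) w)) x < (6/5 + c) * (1/a)^j"
proof -
  have "dist (fst w) (fst ((par ^^ (k - j)) w)) \<le> (6/5) * (1/a)^j"
    using ancestor_level_dist(2)[OF assms(2), of "k - j"] assms(4) by simp
  moreover have "c * (1/a)^k \<le> c * (1/a)^j"
    using scale_antimono[OF assms(4)] assms(5) by (simp add: mult_left_mono)
  moreover have "dist (fst ((par ^^ (k - j)) w)) x \<le> dist (fst w) (fst ((par ^^ (k - j)) w)) + dist (fst w) x"
    by (metis dist_commute dist_triangle)
  ultimately show ?thesis using assms(3) by (simp add: algebra_simps)
qed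

lemma ancestor_vnear_hadj:
  assumes "x \<in> X" "j \<le> k"
  defines "A \<equiv> (par ^^ (k - j)) (vnear x k)"
  shows "A \<in> level Xs j" "A = vnear x j \<or> hadj X a lam Xs A (vnear x j)"
proof -
  show A: "A \<in> level Xs j"
    using ancestor_level_dist(1)[OF vnear(1)[OF assms(1)], of "k - j" k] assms(2)
    by (simp add: A_def)
  have "dist (fst A) x < (6/5 + 1) * (1/a)^j"
    unfolding A_def using vnear[OF assms(1), of k] assms(2)
    by (intro dist_ancestor_point[OF assms(1) vnear(1)[OF assms(1)]]) auto
  then show "A = vnear x j \<or> hadj X a lam Xs A (vnear x j)"
    using near_vertices_hadj[OF A vnear(1)[OF assms(1)] assms(1)] vnear(2)[OF assms(1), of j]
      scale_pos[of j] by simp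
qed

end

section \<open>The weights \<open>\<pi>\<close>\<close>

locale weighted_filling = filling_space +
  fixes rho :: "'a \<times> nat \<Rightarrow> real" and em ep :: real
  assumes H1: "H1 Xs rho em ep" and H2: "H2 X a lam Xs par rho"
begin

abbreviation \<pi> :: "'a \<times> nat \<Rightarrow> real" where "\<pi> \<equiv> piw par rho"

lemma em_pos: "0 < em" and ep_lt_1: "ep < 1"
  and rho_bounds: "v \<in> verts Xs \<Longrightarrow> em \<le> rho v \<and> rho v \<le> ep"
  using H1 unfolding H1_def by auto

lemma em_le_ep: "em \<le> ep"
  using rho_bounds[of "(x0, 0)"] filling_facts(3) by (simp add: verts_iff)

lemma ep_pos: "0 < ep"
  using em_pos em_le_ep by linarith

lemma ancestor_in_verts: "v \<in> verts Xs \<Longrightarrow> i \<le> snd v \<Longrightarrow> (par ^^ i) v \<in> verts Xs"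
  using ancestor_level_dist(1)[of v "snd v" i] by (auto simp: level_iff verts_iff)

lemma rho_pos: "v \<in> verts Xs \<Longrightarrow> 0 < rho v"
  using rho_bounds em_pos by (meson less_le_trans)

lemma piw_pos: "v \<in> verts Xs \<Longrightarrow> 0 < \<pi> v"
  unfolding piw_def by (intro prod_pos) (auto intro: rho_pos ancestor_in_verts)

lemma piw_parent:
  assumes "v \<in> level Xs (Suc k)" shows "\<pi> v = rho v * \<pi> (par v)"
proof -
  have s: "snd v = Suc k" "snd (par v) = k"
    using assms parent_level_dist(1)[OF assms] by (auto simp: level_iff)
  have "\<pi> v = rho v * (\<Prod>i\<in>{0..k}. rho ((par ^^ Suc i) v))"
    unfolding piw_def s by (subst prod.atLeast0_atMost_Suc_shift) (simp add: comp_def)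
  also have "(\<Prod>i\<in>{0..k}. rho ((par ^^ Suc i) v)) = \<pi> (par v)"
    unfolding piw_def s by (simp add: funpow_Suc_right del: funpow.simps)
  finally show ?thesis .
qed

lemma piw_parent_bounds:
  assumes "v \<in> level Xs (Suc k)"
  shows "em * \<pi> (par v) \<le> \<pi> v" "\<pi> v \<le> ep * \<pi> (par v)"
proof -
  have "0 < \<pi> (par v)" using parent_level_dist(1)[OF assms] level_in_verts piw_pos by blast
  then show "em * \<pi> (par v) \<le> \<pi> v" "\<pi> v \<le> ep * \<pi> (par v)"
    using piw_parent[OF assms] rho_bounds[OF level_in_verts[OF assms]] by (simp_all add: mult_right_mono)
qed

lemma piw_ancestor_geometric:
  assumes "v \<in> level Xs k" "d \<le> k"
  shows "\<pi> v \<le> ep ^ d * \<pi> ((par ^^ d) v)"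
  using assms(2)
proof (induction d)
  case (Suc d)
  have "(par ^^ d) v \<in> level Xs (Suc (k - Suc d))"
    using ancestor_level_dist(1)[OF assms(1), of d] Suc.prems by (simp add: Suc_diff_Suc)
  then have "ep ^ d * \<pi> ((par ^^ d) v) \<le> ep ^ d * (ep * \<pi> ((par ^^ Suc d) v))"
    using piw_parent_bounds(2) ep_pos by (intro mult_left_mono) auto
  also have "\<dots> = ep ^ Suc d * \<pi> ((par ^^ Suc d) v)" by simp
  finally show ?case using Suc by simp
qed simp

lemma piw_le_ancestor:
  assumes "v \<in> level Xs k" "d \<le> k" shows "\<pi> v \<le> \<pi> ((par ^^ d) v)"
proof -
  have "0 < \<pi> ((par ^^ d) v)"
    using ancestor_level_dist(1)[OF assms] level_in_verts piw_pos by blast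
  moreover have "ep ^ d \<le> 1" using ep_pos ep_lt_1 by (intro power_le_one) auto
  ultimately have "ep ^ d * \<pi> ((par ^^ d) v) \<le> \<pi> ((par ^^ d) v)"
    using ep_pos by (intro mult_left_le_one_le) auto
  then show ?thesis using piw_ancestor_geometric[OF assms] by linarith
qed

lemma piw_le_power: "v \<in> level Xs k \<Longrightarrow> \<pi> v \<le> ep ^ Suc k"
proof (induction k arbitrary: v)
  case 0
  then have "v = (x0, 0)" using level_0 by auto
  then show ?case using rho_bounds[of v] filling_facts(3) by (simp add: piw_def verts_iff)
next
  case (Suc k)
  have "\<pi> v \<le> ep * \<pi> (par v)" by (rule piw_parent_bounds(2)[OF Suc.prems])
  also have "\<dots> \<le> ep * ep ^ Suc k"
    using Suc.IH[OF parent_level_dist(1)[OF Suc.prems]] ep_pos by (intro mult_left_mono) auto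
  finally show ?case by simp
qed

definition K :: real where
  "K = max 1 (SOME K0. \<forall>u v. hadj X a lam Xs u v \<longrightarrow> \<pi> u \<le> K0 * \<pi> v)"

lemma K_ge_1: "1 \<le> K"
  unfolding K_def by simp

lemma piw_le_K:
  assumes "u = v \<or> hadj X a lam Xs u v" "v \<in> verts Xs" shows "\<pi> u \<le> K * \<pi> v"
proof (cases "u = v")
  case True
  then show ?thesis using K_ge_1 piw_pos[OF assms(2)] by (simp add: mult_le_cancel_right1)
next
  case False
  define K0 where "K0 = (SOME K0. \<forall>u v. hadj X a lam Xs u v \<longrightarrow> \<pi> u \<le> K0 * \<pi> v)"
  have "\<forall>u v. hadj X a lam Xs u v \<longrightarrow> \<pi> u \<le> K0 * \<pi> v"
    unfolding K0_def using H2 unfolding H2_def by (rule someI_ex)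
  then have "\<pi> u \<le> K0 * \<pi> v" using assms(1) False by blast
  also have "\<dots> \<le> K * \<pi> v"
    using piw_pos[OF assms(2)] unfolding K_def K0_def by (intro mult_right_mono) auto
  finally show ?thesis .
qed

definition pnear :: "'a \<Rightarrow> nat \<Rightarrow> real" where
  "pnear x j = \<pi> (vnear x j)"

lemma pnear_pos: "x \<in> X \<Longrightarrow> 0 < pnear x j"
  unfolding pnear_def using vnear(1) level_in_verts piw_pos by blast

lemma pnear_antimono:
  assumes "x \<in> X" "j \<le> k" shows "pnear x k \<le> K * pnear x j"
proof -
  define A where "A = (par ^^ (k - j)) (vnear x k)"
  have A: "A \<in> level Xs j" "A = vnear x j \<or> hadj X a lam Xs A (vnear x j)"
    using ancestor_vnear_hadj[OF assms] unfolding A_def by simp_all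
  have "pnear x k \<le> \<pi> A"
    unfolding pnear_def A_def using piw_le_ancestor[OF vnear(1)[OF assms(1)], of "k - j"] by simp
  also have "\<dots> \<le> K * pnear x j"
    unfolding pnear_def by (rule piw_le_K[OF A(2) level_in_verts[OF vnear(1)[OF assms(1)]]])
  finally show ?thesis .
qed

lemma pnear_Suc_ge:
  assumes "x \<in> X" shows "(em / K) * pnear x j \<le> pnear x (Suc j)"
proof -
  define A where "A = par (vnear x (Suc j))"
  have A: "A \<in> level Xs j" "A = vnear x j \<or> hadj X a lam Xs A (vnear x j)"
    using ancestor_vnear_hadj[OF assms, of j "Suc j"] unfolding A_def by simp_all
  have "vnear x j = A \<or> hadj X a lam Xs (vnear x j) A" using A(2) hadj_sym by blast
  then have "pnear x j \<le> K * \<pi> A"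
    unfolding pnear_def by (rule piw_le_K[OF _ level_in_verts[OF A(1)]])
  have "em * \<pi> A \<le> pnear x (Suc j)"
    unfolding pnear_def A_def by (rule piw_parent_bounds(1)[OF vnear(1)[OF assms]])
  have "em * pnear x j \<le> em * (K * \<pi> A)"
    using \<open>pnear x j \<le> K * \<pi> A\<close> em_pos by (intro mult_left_mono) auto
  also have "\<dots> = K * (em * \<pi> A)" by (simp only: ac_simps)
  also have "\<dots> \<le> K * pnear x (Suc j)"
    using \<open>em * \<pi> A \<le> pnear x (Suc j)\<close> K_ge_1 by (intro mult_left_mono) auto
  finally show ?thesis using K_ge_1 by (simp add: divide_le_eq mult.commute)
qed

lemma pnear_eventually_lt:
  assumes "x \<in> X" "0 < e" shows "\<exists>j0. \<forall>j\<ge>j0. pnear x j < e"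
proof -
  obtain j0 where j0: "ep ^ j0 < e" using real_arch_pow_inv[OF assms(2) ep_lt_1] by blast
  have "pnear x j < e" if "j0 \<le> j" for j
  proof -
    have "pnear x j \<le> ep ^ Suc j" unfolding pnear_def using piw_le_power vnear(1)[OF assms(1)] by blast
    also have "\<dots> \<le> ep ^ j0" using ep_pos ep_lt_1 that by (intro power_decreasing) auto
    finally show ?thesis using j0 by linarith
  qed
  then show ?thesis by blast
qed

end

section \<open>The distance \<open>\<Theta>\<close>\<close>

definition chain_in :: "'a set \<Rightarrow> 'a \<Rightarrow> 'a \<Rightarrow> 'a list \<Rightarrow> bool" where
  "chain_in X x y xs \<longleftrightarrow> 2 \<le> length xs \<and> hd xs = x \<and> last xs = y \<and> set xs \<subseteq> X \<and> successively (\<noteq>) xs"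

lemma chain_in_two: "x \<in> X \<Longrightarrow> y \<in> X \<Longrightarrow> x \<noteq> y \<Longrightarrow> chain_in X x y [x, y]"
  unfolding chain_in_def by auto

lemma chain_in_rev: "chain_in X x y xs \<Longrightarrow> chain_in X y x (rev xs)"
  unfolding chain_in_def successively_rev
  by (auto simp: hd_rev last_rev elim: successively_mono)

lemma chain_in_append:
  assumes "chain_in X x y xs" "chain_in X y z ys" "x \<noteq> z"
  shows "chain_in X x z (xs @ tl ys)"
proof -
  obtain ys' where ys: "ys = y # ys'"
    using assms(2) unfolding chain_in_def by (cases ys) auto
  then have "ys' \<noteq> []" using assms(2) unfolding chain_in_def by auto
  have "xs \<noteq> []" using assms(1) unfolding chain_in_def by auto
  then show ?thesis
    using assms ys \<open>ys' \<noteq> []\<close> unfolding chain_in_def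
    by (auto simp: successively_append_iff successively_Cons)
qed

context filling_space
begin

abbreviation ct :: "'a \<Rightarrow> 'a \<Rightarrow> nat" where "ct \<equiv> ctop X a Xs"
abbreviation cs :: "'a \<Rightarrow> 'a \<Rightarrow> ('a \<times> nat) set" where "cs \<equiv> cset X a Xs"

lemma ctop_witness_maximal:
  assumes xy: "x \<in> X" "y \<in> X" "x \<noteq> y"
  shows "\<exists>z\<in>Xs (ct x y). x \<in> Xball X z (2*(1/a)^ct x y) \<and> y \<in> Xball X z (2*(1/a)^ct x y)"
    and "\<And>n. (\<exists>z\<in>Xs n. x \<in> Xball X z (2*(1/a)^n) \<and> y \<in> Xball X z (2*(1/a)^n)) \<Longrightarrow> n \<le> ct x y"
proof -
  define P where "P n \<longleftrightarrow> (\<exists>z\<in>Xs n. x \<in> Xball X z (2*(1/a)^n) \<and> y \<in> Xball X z (2*(1/a)^n))" for n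
  have ct: "ct x y = (GREATEST n. P n)" unfolding ctop_def P_def ..
  have P0: "P 0" unfolding P_def
    using filling_facts(3) dist_le_half[OF x0_in_X xy(1)] dist_le_half[OF x0_in_X xy(2)] xy
    by (auto simp: Xball_def)
  have "0 < dist x y / 4" using xy by simp
  then obtain N where N: "(1/a)^N < dist x y / 4" using real_arch_pow_inv scale_lt_1 by blast
  have bounded: "n \<le> N" if "P n" for n
  proof (rule ccontr)
    assume "\<not> n \<le> N"
    then have "(1/a)^n \<le> (1/a)^N" using scale_antimono by simp
    obtain z where "dist z x < 2*(1/a)^n" "dist z y < 2*(1/a)^n"
      using \<open>P n\<close> unfolding P_def Xball_def by blast
    moreover have "dist x y \<le> dist z x + dist z y" by (metis dist_commute dist_triangle)
    ultimately show False using N \<open>(1/a)^n \<le> (1/a)^N\<close> by linarith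
  qed
  show "\<exists>z\<in>Xs (ct x y). x \<in> Xball X z (2*(1/a)^ct x y) \<and> y \<in> Xball X z (2*(1/a)^ct x y)"
    using GreatestI_nat[of P 0 N, OF P0 bounded] unfolding ct P_def by blast
  show "n \<le> ct x y" if "\<exists>z\<in>Xs n. x \<in> Xball X z (2*(1/a)^n) \<and> y \<in> Xball X z (2*(1/a)^n)" for n
    using Greatest_le_nat[of P n N] that bounded unfolding ct P_def by blast
qed

lemma dist_lt_ctop:
  assumes "x \<in> X" "y \<in> X" "x \<noteq> y" shows "dist x y < 4*(1/a)^ct x y"
proof -
  obtain z where "dist z x < 2*(1/a)^ct x y" "dist z y < 2*(1/a)^ct x y"
    using ctop_witness_maximal(1)[OF assms] unfolding Xball_def by blast
  moreover have "dist x y \<le> dist z x + dist z y" by (metis dist_commute dist_triangle)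
  ultimately show ?thesis by linarith
qed

lemma ctop_ge:
  assumes "x \<in> X" "y \<in> X" "x \<noteq> y" "dist x y < (1/a)^j" shows "j \<le> ct x y"
proof (rule ctop_witness_maximal(2)[OF assms(1-3)])
  have d1: "dist (fst (vnear x j)) x < (1/a)^j" by (rule vnear(2)[OF assms(1)])
  have "dist (fst (vnear x j)) y \<le> dist (fst (vnear x j)) x + dist x y" by (rule dist_triangle)
  then have d2: "dist (fst (vnear x j)) y < 2*(1/a)^j" using d1 assms(4) by linarith
  have "fst (vnear x j) \<in> Xs j" using vnear(1)[OF assms(1), of j] by (simp add: level_iff)
  then show "\<exists>z\<in>Xs j. x \<in> Xball X z (2*(1/a)^j) \<and> y \<in> Xball X z (2*(1/a)^j)"
    using d1 d2 assms(1,2) scale_pos[of j] by (intro bexI[of _ "fst (vnear x j)"]) (auto simp: Xball_def)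
qed

lemma ctop_sym: "ct x y = ct y x"
  unfolding ctop_def by (simp add: conj_commute)

lemma cset_sym: "cs x y = cs y x"
  unfolding cset_def by (auto simp: ctop_sym)

lemma cset_level: "w \<in> cs x y \<Longrightarrow> w \<in> level Xs (ct x y)"
  unfolding cset_def by (auto simp: level_iff verts_iff)

lemma cset_near: "w \<in> cs x y \<Longrightarrow> dist (fst w) x < 2*(1/a)^ct x y \<and> dist (fst w) y < 2*(1/a)^ct x y"
  unfolding cset_def by (auto simp: Xball_def)

lemma finite_cset: "finite (cs x y)"
  using finite_level[of "ct x y"] cset_level by (meson finite_subset subsetI)

lemma cset_nonempty:
  assumes "x \<in> X" "y \<in> X" "x \<noteq> y" shows "cs x y \<noteq> {}"
proof -
  obtain z where "z \<in> Xs (ct x y)" "x \<in> Xball X z (2*(1/a)^ct x y)" "y \<in> Xball X z (2*(1/a)^ct x y)"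
    using ctop_witness_maximal(1)[OF assms] by blast
  then have "(z, ct x y) \<in> cs x y" unfolding cset_def by (auto simp: verts_iff)
  then show ?thesis by blast
qed

end

context weighted_filling
begin

abbreviation pc :: "'a \<Rightarrow> 'a \<Rightarrow> real" where "pc \<equiv> piC X a Xs par rho"
abbreviation \<Theta> :: "'a \<Rightarrow> 'a \<Rightarrow> real" where "\<Theta> \<equiv> Theta X a Xs par rho"

lemma piC_sym: "pc x y = pc y x"
  unfolding piC_def by (simp add: cset_sym)

lemma piC_ge: "w \<in> cs x y \<Longrightarrow> \<pi> w \<le> pc x y"
  unfolding piC_def using finite_cset by (intro Max_ge) auto

lemma piC_attained:
  assumes "x \<in> X" "y \<in> X" "x \<noteq> y" obtains w where "w \<in> cs x y" "pc x y = \<pi> w"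
proof -
  have "pc x y \<in> \<pi> ` cs x y"
    unfolding piC_def using finite_cset cset_nonempty[OF assms] by (intro Max_in) auto
  then show ?thesis using that by auto
qed

lemma piC_pos: "x \<in> X \<Longrightarrow> y \<in> X \<Longrightarrow> x \<noteq> y \<Longrightarrow> 0 < pc x y"
  by (metis piC_attained cset_level piw_pos level_in_verts)

lemma piC_pnear_comparable:
  assumes "x \<in> X" "y \<in> X" "x \<noteq> y"
  shows "pc x y \<le> K * pnear x (ct x y)" "pnear x (ct x y) \<le> K * pc x y"
proof -
  obtain w where w: "w \<in> cs x y" "pc x y = \<pi> w" using piC_attained[OF assms] by blast
  have "dist (fst w) x < 6*(1/a)^ct x y"
    using cset_near[OF w(1)] scale_pos[of "ct x y"] by linarith
  moreover have "dist (fst (vnear x (ct x y))) x < 6*(1/a)^ct x y"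
    using vnear(2)[OF assms(1), of "ct x y"] scale_pos[of "ct x y"] by linarith
  ultimately have "w = vnear x (ct x y) \<or> hadj X a lam Xs w (vnear x (ct x y))"
    using near_vertices_hadj[OF cset_level[OF w(1)] vnear(1)[OF assms(1)] assms(1)] by blast
  then show "pc x y \<le> K * pnear x (ct x y)" "pnear x (ct x y) \<le> K * pc x y"
    unfolding pnear_def w(2)
    using piw_le_K hadj_sym vnear(1)[OF assms(1)] cset_level[OF w(1)] level_in_verts by metis+
qed

definition chain_costs :: "'a \<Rightarrow> 'a \<Rightarrow> real set" where
  "chain_costs x y = {chain_sum pc xs | xs. chain_in X x y xs}"

lemma Theta_eq_Inf: "x \<noteq> y \<Longrightarrow> \<Theta> x y = Inf (chain_costs x y)"
  unfolding Theta_def chain_costs_def chain_in_def chain_sum_def successively_conv_nth by simp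

lemma Theta_self [simp]: "\<Theta> x x = 0"
  unfolding Theta_def by simp

lemma chain_costs_nonneg:
  assumes "t \<in> chain_costs x y" shows "0 \<le> t"
proof -
  obtain xs where "t = chain_sum pc xs" "set xs \<subseteq> X" "successively (\<noteq>) xs"
    using assms unfolding chain_costs_def chain_in_def by blast
  then show ?thesis by (auto intro: chain_sum_nonneg less_imp_le piC_pos)
qed

lemma bdd_below_chain_costs: "bdd_below (chain_costs x y)"
  using chain_costs_nonneg by (intro bdd_belowI[of _ 0]) auto

lemma piC_in_chain_costs: "x \<in> X \<Longrightarrow> y \<in> X \<Longrightarrow> x \<noteq> y \<Longrightarrow> pc x y \<in> chain_costs x y"
  unfolding chain_costs_def using chain_in_two by (intro CollectI exI[of _ "[x,y]"]) auto

lemma Theta_le_piC: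
  assumes "x \<in> X" "y \<in> X" "x \<noteq> y" shows "\<Theta> x y \<le> pc x y"
  unfolding Theta_eq_Inf[OF assms(3)] by (rule cInf_lower[OF piC_in_chain_costs[OF assms] bdd_below_chain_costs])

lemma Theta_nonneg:
  assumes "x \<in> X" "y \<in> X" shows "0 \<le> \<Theta> x y"
proof (cases "x = y")
  case False
  then show ?thesis unfolding Theta_eq_Inf[OF False]
    using piC_in_chain_costs[OF assms False] chain_costs_nonneg by (intro cInf_greatest) auto
qed simp

lemma chain_costs_sym: "chain_costs x y = chain_costs y x"
proof -
  have "chain_costs y x \<subseteq> chain_costs x y" for x y
  proof
    fix t assume "t \<in> chain_costs y x"
    then obtain xs where xs: "t = chain_sum pc xs" "chain_in X y x xs" unfolding chain_costs_def by blast
    have "chain_sum pc (rev xs) = chain_sum pc xs" by (simp add: chain_sum_rev piC_sym)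
    then show "t \<in> chain_costs x y" unfolding chain_costs_def using chain_in_rev[OF xs(2)] xs(1)
      by (intro CollectI exI[of _ "rev xs"]) simp
  qed
  then show ?thesis by blast
qed

lemma Theta_sym: "\<Theta> x y = \<Theta> y x"
  by (cases "x = y") (simp_all add: Theta_eq_Inf chain_costs_sym)

lemma Theta_triangle:
  assumes "x \<in> X" "y \<in> X" "z \<in> X" shows "\<Theta> x z \<le> \<Theta> x y + \<Theta> y z"
proof (cases "x = z \<or> x = y \<or> y = z")
  case True
  then show ?thesis using Theta_nonneg assms by auto
next
  case False
  then have xy: "x \<noteq> y" and yz: "y \<noteq> z" and xz: "x \<noteq> z" by auto
  have concat: "s + t \<in> chain_costs x z" if st: "s \<in> chain_costs x y" "t \<in> chain_costs y z" for s t
  proof -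
    obtain xs where xs: "s = chain_sum pc xs" "chain_in X x y xs" using st(1) unfolding chain_costs_def by blast
    obtain ys where ys: "t = chain_sum pc ys" "chain_in X y z ys" using st(2) unfolding chain_costs_def by blast
    have "chain_sum pc (xs @ tl ys) = s + t"
      using xs ys unfolding chain_in_def by (subst chain_sum_append) auto
    then show ?thesis unfolding chain_costs_def using chain_in_append[OF xs(2) ys(2) xz]
      by (intro CollectI exI[of _ "xs @ tl ys"]) simp
  qed
  have ne: "chain_costs x y \<noteq> {}" "chain_costs y z \<noteq> {}"
    using piC_in_chain_costs assms xy yz by blast+
  have "Inf (chain_costs x z) - t \<le> Inf (chain_costs x y)" if "t \<in> chain_costs y z" for t
    using cInf_lower[OF concat[OF _ that] bdd_below_chain_costs]
    by (intro cInf_greatest[OF ne(1)]) (simp add: algebra_simps)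
  then have "Inf (chain_costs x z) - Inf (chain_costs x y) \<le> Inf (chain_costs y z)"
    by (intro cInf_greatest[OF ne(2)]) (simp add: algebra_simps)
  then show ?thesis using Theta_eq_Inf xy yz xz by simp
qed

lemma Theta_le_pnear:
  assumes "x \<in> X" "y \<in> X" "dist x y < (1/a)^j" shows "\<Theta> x y \<le> K\<^sup>2 * pnear x j"
proof (cases "x = y")
  case True
  then show ?thesis using pnear_pos[OF assms(1), of j] by simp
next
  case False
  have "\<Theta> x y \<le> pc x y" by (rule Theta_le_piC[OF assms(1,2) False])
  also have "\<dots> \<le> K * pnear x (ct x y)" by (rule piC_pnear_comparable(1)[OF assms(1,2) False])
  also have "\<dots> \<le> K * (K * pnear x j)"
    using pnear_antimono[OF assms(1) ctop_ge[OF assms(1,2) False assms(3)]] K_ge_1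
    by (intro mult_left_mono) auto
  finally show ?thesis by (simp add: power2_eq_square mult.assoc)
qed

end

section \<open>Lower bound for \<open>\<Theta>\<close>\<close>

context filling_space
begin

abbreviation adjacent :: "'a \<times> nat \<Rightarrow> 'a \<times> nat \<Rightarrow> bool" where
  "adjacent \<equiv> adj X a lam Xs par"

definition ascent :: "'a \<times> nat \<Rightarrow> nat \<Rightarrow> ('a \<times> nat) list" where
  "ascent w d = map (\<lambda>i. (par ^^ i) w) [0..<Suc d]"

lemma ascent_ends: "ascent w d \<noteq> []" "hd (ascent w d) = w" "last (ascent w d) = (par ^^ d) w"
  unfolding ascent_def by (auto simp: hd_map last_map simp del: upt_Suc)

lemma ascent_Suc: "ascent w (Suc d) = ascent w d @ [(par ^^ Suc d) w]"
  unfolding ascent_def by simp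

lemma set_ascent:
  assumes "w \<in> level Xs k" "d \<le> k" shows "set (ascent w d) \<subseteq> verts Xs"
proof
  fix v assume "v \<in> set (ascent w d)"
  then obtain i where "i \<le> d" "v = (par ^^ i) w"
    unfolding ascent_def by (auto simp del: upt_Suc simp: less_Suc_eq_le)
  then show "v \<in> verts Xs"
    using level_in_verts[OF ancestor_level_dist(1)[OF assms(1), of i]] assms(2) by simp
qed

lemma successively_adjacent_ascent:
  assumes "w \<in> level Xs k" "d \<le> k" shows "successively adjacent (ascent w d)"
  unfolding successively_conv_nth
proof (intro allI impI)
  fix i assume "Suc i < length (ascent w d)"
  then have i: "i < d" unfolding ascent_def by simp
  have "(par ^^ i) w \<in> level Xs (Suc (k - Suc i))" "(par ^^ Suc i) w \<in> level Xs (k - Suc i)"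
    using ancestor_level_dist(1)[OF assms(1), of i] ancestor_level_dist(1)[OF assms(1), of "Suc i"]
      i assms(2) by (simp_all add: Suc_diff_Suc)
  moreover have "ascent w d ! i = (par ^^ i) w" "ascent w d ! Suc i = (par ^^ Suc i) w"
    unfolding ascent_def using i by (simp_all add: nth_map del: upt_Suc)
  ultimately show "adjacent (ascent w d ! i) (ascent w d ! Suc i)"
    unfolding adj_def using level_in_verts by (auto simp: level_iff)
qed

lemma ascent_top_near:
  assumes "x \<in> X" "t < N"
  shows "(par ^^ (N - t)) (vnear x N) \<in> level Xs t"
    and "dist (fst ((par ^^ (N - t)) (vnear x N))) x < 2 * (1/a)^t"
proof -
  note w = vnear[OF assms(1), of N]
  show "(par ^^ (N - t)) (vnear x N) \<in> level Xs t"
    using ancestor_level_dist(1)[OF w(1), of "N - t"] assms(2) by simp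
  have "(1/a)^N \<le> (1/a)^Suc t" using assms(2) by (intro scale_antimono) simp
  also have "\<dots> \<le> (1/6) * (1/a)^t" by (rule scale_Suc_le)
  finally have "(1/a)^N \<le> (1/6) * (1/a)^t" .
  moreover have "dist (fst (vnear x N)) (fst ((par ^^ (N - t)) (vnear x N))) \<le> (6/5) * (1/a)^t"
    using ancestor_level_dist(2)[OF w(1), of "N - t"] assms(2) by simp
  moreover have "dist (fst ((par ^^ (N - t)) (vnear x N))) x
      \<le> dist (fst (vnear x N)) (fst ((par ^^ (N - t)) (vnear x N))) + dist (fst (vnear x N)) x"
    by (metis dist_commute dist_triangle)
  ultimately show "dist (fst ((par ^^ (N - t)) (vnear x N))) x < 2 * (1/a)^t"
    using w(2) scale_pos[of t] by linarith
qed

definition bridge :: "nat \<Rightarrow> 'a \<Rightarrow> 'a \<Rightarrow> ('a \<times> nat) list" where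
  "bridge N x y = ascent (vnear x N) (N - ct x y) @ rev (ascent (vnear y N) (N - ct x y))"

lemma bridge_tops_near:
  assumes "x \<in> X" "y \<in> X" "x \<noteq> y" "ct x y < N" "c \<in> cs x y"
  defines "A \<equiv> \<lambda>z. (par ^^ (N - ct x y)) (vnear z N)"
  shows "A x = c \<or> hadj X a lam Xs (A x) c" "A y = c \<or> hadj X a lam Xs (A y) c"
    and "A x = A y \<or> hadj X a lam Xs (A x) (A y)"
proof -
  let ?t = "ct x y"
  have A: "A z \<in> level Xs ?t" "dist (fst (A z)) z < 2 * (1/a)^?t" if "z \<in> X" for z
    unfolding A_def using ascent_top_near[OF that assms(4)] by auto
  have c: "c \<in> level Xs ?t" "dist (fst c) x < 2 * (1/a)^?t" "dist (fst c) y < 2 * (1/a)^?t"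
    using cset_level[OF assms(5)] cset_near[OF assms(5)] by auto
  have "dist (fst (A y)) x \<le> dist (fst (A y)) y + dist y (fst c) + dist (fst c) x"
    by (metis dist_triangle add_right_mono order_trans)
  then have Ayx: "dist (fst (A y)) x < 6 * (1/a)^?t"
    using A[OF assms(2)] c by (simp add: dist_commute)
  have small: "2 * (1/a)^?t < 6 * (1/a)^?t" using scale_pos[of ?t] by simp
  show "A x = c \<or> hadj X a lam Xs (A x) c"
    using near_vertices_hadj[OF A(1)[OF assms(1)] c(1) assms(1)] A(2)[OF assms(1)] c(2) small by simp
  show "A y = c \<or> hadj X a lam Xs (A y) c"
    using near_vertices_hadj[OF A(1)[OF assms(2)] c(1) assms(2)] A(2)[OF assms(2)] c(3) small by simp
  show "A x = A y \<or> hadj X a lam Xs (A x) (A y)"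
    using near_vertices_hadj[OF A(1)[OF assms(1)] A(1)[OF assms(2)] assms(1)] A(2)[OF assms(1)] Ayx small
    by simp
qed

lemma bridge_path:
  assumes "x \<in> X" "y \<in> X" "x \<noteq> y" "ct x y < N"
  shows "bridge N x y \<noteq> []" "hd (bridge N x y) = vnear x N" "last (bridge N x y) = vnear y N"
    "set (bridge N x y) \<subseteq> verts Xs" "successively (\<lambda>u v. u = v \<or> adjacent u v) (bridge N x y)"
proof -
  let ?d = "N - ct x y"
  have w: "vnear x N \<in> level Xs N" "vnear y N \<in> level Xs N" "?d \<le> N"
    using vnear(1) assms by auto
  show "bridge N x y \<noteq> []" "hd (bridge N x y) = vnear x N" "last (bridge N x y) = vnear y N"
    unfolding bridge_def using ascent_ends by (simp_all add: last_rev)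
  show "set (bridge N x y) \<subseteq> verts Xs"
    unfolding bridge_def using set_ascent w by auto
  obtain c where "c \<in> cs x y" using cset_nonempty[OF assms(1-3)] by blast
  note tops = bridge_tops_near[OF assms this]
  have "successively (\<lambda>u v. u = v \<or> adjacent u v) (ascent (vnear x N) ?d)"
    using successively_adjacent_ascent[OF w(1,3)] by (rule successively_mono) simp
  moreover have "successively (\<lambda>u v. u = v \<or> adjacent u v) (rev (ascent (vnear y N) ?d))"
    unfolding successively_rev using successively_adjacent_ascent[OF w(2,3)]
    by (rule successively_mono) (simp add: adj_sym)
  ultimately show "successively (\<lambda>u v. u = v \<or> adjacent u v) (bridge N x y)"
    unfolding bridge_def successively_append_iff
    using tops(3) ascent_ends by (auto simp: hd_rev adj_def)
qed

lemma concat_bridges_path: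
  assumes "2 \<le> length zs" "set zs \<subseteq> X" "successively (\<lambda>u v. u \<noteq> v \<and> ct u v < N) zs"
  defines "\<gamma> \<equiv> concat (map2 (bridge N) zs (tl zs))"
  shows "\<gamma> \<noteq> [] \<and> hd \<gamma> = vnear (hd zs) N \<and> last \<gamma> = vnear (last zs) N \<and>
    set \<gamma> \<subseteq> verts Xs \<and> successively (\<lambda>u v. u = v \<or> adjacent u v) \<gamma>"
  unfolding \<gamma>_def using assms(1-3)
proof (induction zs rule: induct_list012)
  case (3 x y zs)
  have xy: "x \<in> X" "y \<in> X" "x \<noteq> y" "ct x y < N" using "3.prems"(2,3) by auto
  note B = bridge_path[OF xy]
  show ?case
  proof (cases "zs = []")
    case False
    then have "2 \<le> length (y # zs)" by (cases zs) auto
    then have IH: "concat (map2 (bridge N) (y # zs) zs) \<noteq> [] \<and>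
        hd (concat (map2 (bridge N) (y # zs) zs)) = vnear y N \<and>
        last (concat (map2 (bridge N) (y # zs) zs)) = vnear (last (y # zs)) N \<and>
        set (concat (map2 (bridge N) (y # zs) zs)) \<subseteq> verts Xs \<and>
        successively (\<lambda>u v. u = v \<or> adjacent u v) (concat (map2 (bridge N) (y # zs) zs))"
      using "3.IH"(2) "3.prems"(2,3) by simp
    then show ?thesis using B False by (auto simp: successively_append_iff)
  qed (use B in simp)
qed auto

end

context weighted_filling
begin

lemma sum_piw_ascent:
  assumes "w \<in> level Xs k" "d \<le> k"
  shows "sum_list (map \<pi> (ascent w d)) \<le> \<pi> ((par ^^ d) w) / (1 - ep)"
  using assms(2)
proof (induction d)
  case 0
  have "0 < \<pi> w" using assms(1) level_in_verts piw_pos by blast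
  then show ?case using ep_pos ep_lt_1 unfolding ascent_def by (simp add: le_divide_eq)
next
  case (Suc d)
  have "(par ^^ d) w \<in> level Xs (Suc (k - Suc d))"
    using ancestor_level_dist(1)[OF assms(1), of d] Suc.prems by (simp add: Suc_diff_Suc)
  then have "\<pi> ((par ^^ d) w) \<le> ep * \<pi> ((par ^^ Suc d) w)"
    using piw_parent_bounds(2) by simp
  have "sum_list (map \<pi> (ascent w (Suc d))) = sum_list (map \<pi> (ascent w d)) + \<pi> ((par ^^ Suc d) w)"
    by (simp add: ascent_Suc)
  also have "\<dots> \<le> \<pi> ((par ^^ d) w) / (1 - ep) + \<pi> ((par ^^ Suc d) w)"
    using Suc by simp
  also have "\<dots> \<le> ep * \<pi> ((par ^^ Suc d) w) / (1 - ep) + \<pi> ((par ^^ Suc d) w)"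
    using \<open>\<pi> ((par ^^ d) w) \<le> ep * \<pi> ((par ^^ Suc d) w)\<close> ep_lt_1 by (simp add: divide_right_mono)
  also have "\<dots> = \<pi> ((par ^^ Suc d) w) / (1 - ep)"
    using ep_lt_1 by (simp add: field_simps)
  finally show ?case .
qed

lemma sum_piw_bridge:
  assumes "x \<in> X" "y \<in> X" "x \<noteq> y" "ct x y < N"
  shows "sum_list (map \<pi> (bridge N x y)) \<le> 2 * K * pc x y / (1 - ep)"
proof -
  let ?d = "N - ct x y"
  define A where "A = (\<lambda>z. (par ^^ ?d) (vnear z N))"
  obtain c where c: "c \<in> cs x y" using cset_nonempty[OF assms(1-3)] by blast
  have top: "\<pi> (A z) \<le> K * pc x y" if "z \<in> {x, y}" for z
  proof -
    have "A z = c \<or> hadj X a lam Xs (A z) c"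
      using bridge_tops_near[OF assms c] that unfolding A_def by auto
    then have "\<pi> (A z) \<le> K * \<pi> c" using piw_le_K cset_level[OF c] level_in_verts by blast
    also have "\<dots> \<le> K * pc x y" using piC_ge[OF c] K_ge_1 by simp
    finally show ?thesis .
  qed
  have "sum_list (map \<pi> (bridge N x y))
      = sum_list (map \<pi> (ascent (vnear x N) ?d)) + sum_list (map \<pi> (ascent (vnear y N) ?d))"
    unfolding bridge_def by (simp add: rev_map[symmetric])
  also have "\<dots> \<le> \<pi> (A x) / (1 - ep) + \<pi> (A y) / (1 - ep)"
    unfolding A_def
    using sum_piw_ascent[OF vnear(1)[OF assms(1)], of ?d N] sum_piw_ascent[OF vnear(1)[OF assms(2)], of ?d N]
    by (intro add_mono) simp_all
  also have "\<dots> \<le> K * pc x y / (1 - ep) + K * pc x y / (1 - ep)"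
    using top ep_lt_1 by (intro add_mono divide_right_mono) auto
  finally show ?thesis by (simp add: field_simps)
qed

lemma sum_piw_concat_bridges:
  assumes "set zs \<subseteq> X" "successively (\<lambda>u v. u \<noteq> v \<and> ct u v < N) zs"
  shows "sum_list (map \<pi> (concat (map2 (bridge N) zs (tl zs)))) \<le> 2 * K / (1 - ep) * chain_sum pc zs"
  using assms
proof (induction zs rule: induct_list012)
  case (3 x y zs)
  then have "sum_list (map \<pi> (bridge N x y)) \<le> 2 * K * pc x y / (1 - ep)"
    by (intro sum_piw_bridge) auto
  moreover have "sum_list (map \<pi> (concat (map2 (bridge N) (y # zs) zs))) \<le> 2 * K / (1 - ep) * chain_sum pc (y # zs)"
    using 3 by simp
  ultimately show ?case by (simp add: add_divide_distrib algebra_simps)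
qed auto

end

locale theta_filling = weighted_filling +
  assumes H3: "H3 X a lam Xs par rho"
begin

definition K1 :: real where
  "K1 = (SOME K1. K1 > 0 \<and> (\<forall>x\<in>X. \<forall>y\<in>X. x \<noteq> y \<longrightarrow>
     (\<exists>n0. \<forall>n\<ge>n0. \<forall>\<gamma>\<in>Gamma X a lam Xs par n x y. pc x y / K1 \<le> Lrho par rho \<gamma>)))"

lemma K1: "K1 > 0" "\<And>x y. x \<in> X \<Longrightarrow> y \<in> X \<Longrightarrow> x \<noteq> y \<Longrightarrow>
     \<exists>n0. \<forall>n\<ge>n0. \<forall>\<gamma>\<in>Gamma X a lam Xs par n x y. pc x y / K1 \<le> Lrho par rho \<gamma>"
proof -
  have "K1 > 0 \<and> (\<forall>x\<in>X. \<forall>y\<in>X. x \<noteq> y \<longrightarrow>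
     (\<exists>n0. \<forall>n\<ge>n0. \<forall>\<gamma>\<in>Gamma X a lam Xs par n x y. pc x y / K1 \<le> Lrho par rho \<gamma>))"
    unfolding K1_def using H3 unfolding H3_def by (rule someI_ex)
  then show "K1 > 0" "\<And>x y. x \<in> X \<Longrightarrow> y \<in> X \<Longrightarrow> x \<noteq> y \<Longrightarrow>
     \<exists>n0. \<forall>n\<ge>n0. \<forall>\<gamma>\<in>Gamma X a lam Xs par n x y. pc x y / K1 \<le> Lrho par rho \<gamma>" by auto
qed

definition theta_const :: real where
  "theta_const = (1 - ep) / (2 * K * K1)"

lemma theta_const_pos: "0 < theta_const"
  unfolding theta_const_def using ep_lt_1 K_ge_1 K1(1) by simp

text \<open>Joining the bridges of a chain at a level deeper than all its \<open>ct\<close>'s gives a path to which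
  (H3) applies.\<close>
lemma piC_le_chain_sum:
  assumes xy: "x \<in> X" "y \<in> X" "x \<noteq> y" and chain: "chain_in X x y zs"
  shows "theta_const * pc x y \<le> chain_sum pc zs"
proof -
  obtain n0 where n0: "\<forall>n\<ge>n0. \<forall>\<gamma>\<in>Gamma X a lam Xs par n x y. pc x y / K1 \<le> Lrho par rho \<gamma>"
    using K1(2)[OF xy] by blast
  define N where "N = Suc (n0 + chain_sum ct zs)"
  have zs: "2 \<le> length zs" "hd zs = x" "last zs = y" "set zs \<subseteq> X" "successively (\<noteq>) zs"
    using chain unfolding chain_in_def by auto
  have "ct (zs ! i) (zs ! Suc i) < N" if "Suc i < length zs" for i
    using member_le_chain_sum[OF that, of ct] unfolding N_def by simp
  then have deep: "successively (\<lambda>u v. u \<noteq> v \<and> ct u v < N) zs"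
    using zs(5) unfolding successively_conv_nth by blast
  define \<gamma>' where "\<gamma>' = concat (map2 (bridge N) zs (tl zs))"
  note path = concat_bridges_path[OF zs(1,4) deep, folded \<gamma>'_def]
  define \<gamma> where "\<gamma> = remdups_adj \<gamma>'"
  have "successively (\<lambda>u v. u = v \<or> adjacent u v) \<gamma>"
    unfolding \<gamma>_def using path by (intro successively_remdups_adjI) auto
  moreover have "successively (\<noteq>) \<gamma>"
    unfolding \<gamma>_def using distinct_adj_remdups_adj unfolding distinct_adj_def .
  ultimately have "\<forall>i. Suc i < length \<gamma> \<longrightarrow> adjacent (\<gamma> ! i) (\<gamma> ! Suc i)"
    unfolding successively_conv_nth by blast
  then have "\<gamma> \<in> Gamma X a lam Xs par N x y"
    unfolding Gamma_def gpath_def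
    using path zs vnear[OF xy(1), of N] vnear[OF xy(2), of N] xy
    by (auto simp: \<gamma>_def vball_def Xball_def level_iff)
  moreover have "n0 \<le> N" by (simp add: N_def)
  ultimately have "pc x y / K1 \<le> Lrho par rho \<gamma>" using n0 by blast
  also have "\<dots> \<le> sum_list (map \<pi> \<gamma>')" unfolding Lrho_def \<gamma>_def
    by (rule sum_list_remdups_adj_le) (use path piw_pos in \<open>auto intro: less_imp_le\<close>)
  also have "\<dots> \<le> 2 * K / (1 - ep) * chain_sum pc zs"
    unfolding \<gamma>'_def by (rule sum_piw_concat_bridges[OF zs(4) deep])
  finally show ?thesis using K1(1) K_ge_1 ep_lt_1 unfolding theta_const_def by (simp add: field_simps)
qed

lemma piC_le_Theta:
  assumes "x \<in> X" "y \<in> X" "x \<noteq> y" shows "theta_const * pc x y \<le> \<Theta> x y"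
  unfolding Theta_eq_Inf[OF assms(3)] using piC_in_chain_costs[OF assms]
  by (intro cInf_greatest) (auto simp: chain_costs_def intro: piC_le_chain_sum[OF assms])

lemma pnear_le_Theta:
  assumes "x \<in> X" "y \<in> X" "x \<noteq> y" "ct x y \<le> m"
  shows "theta_const * pnear x m \<le> K\<^sup>2 * \<Theta> x y"
proof -
  have "pnear x m \<le> K * pnear x (ct x y)" by (rule pnear_antimono[OF assms(1,4)])
  also have "\<dots> \<le> K * (K * pc x y)"
    using piC_pnear_comparable(2)[OF assms(1-3)] K_ge_1 by (intro mult_left_mono) auto
  finally have "theta_const * pnear x m \<le> K\<^sup>2 * (theta_const * pc x y)"
    using theta_const_pos by (simp add: power2_eq_square mult_left_mono mult_ac)
  also have "\<dots> \<le> K\<^sup>2 * \<Theta> x y" using piC_le_Theta[OF assms(1-3)] by (intro mult_left_mono) auto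
  finally show ?thesis .
qed

end

context theta_filling
begin

lemma Theta_lt_1:
  assumes "x \<in> X" "y \<in> X" shows "\<Theta> x y < 1"
proof (cases "x = y")
  case False
  obtain w where w: "w \<in> cs x y" "pc x y = \<pi> w" using piC_attained[OF assms False] by blast
  have "\<pi> w \<le> ep ^ Suc (ct x y)" using piw_le_power cset_level[OF w(1)] by blast
  also have "\<dots> \<le> ep" using ep_pos ep_lt_1 power_decreasing[of 1 "Suc (ct x y)" ep] by simp
  finally show ?thesis using Theta_le_piC[OF assms False] w(2) ep_lt_1 by simp
qed simp

lemma Dball_Theta_eq_X: "x \<in> X \<Longrightarrow> 1 \<le> s \<Longrightarrow> Dball X \<Theta> x s = X"
  using Theta_lt_1 unfolding Dball_def by force

lemma ball_subset_Dball_Theta: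
  assumes "x \<in> X" "K\<^sup>2 * pnear x n < r"
  shows "X \<inter> ball x ((1/a)^n) \<subseteq> Dball X \<Theta> x r"
  using Theta_le_pnear[OF assms(1)] assms(2) unfolding Dball_def by fastforce

lemma Dball_Theta_subset_ball:
  assumes x: "x \<in> X" and m: "m = 0 \<or> K\<^sup>2 * R \<le> theta_const * pnear x m"
  shows "Dball X \<Theta> x R \<subseteq> ball x ((2/3) * (1/a)^m)"
proof
  fix y assume "y \<in> Dball X \<Theta> x R"
  then have y: "y \<in> X" "\<Theta> x y < R" unfolding Dball_def by auto
  show "y \<in> ball x ((2/3) * (1/a)^m)"
  proof (cases "y = x \<or> m = 0")
    case True
    then show ?thesis using scale_pos[of m] dist_le_half[OF x y(1)] by auto
  next
    case False
    then have "x \<noteq> y" "K\<^sup>2 * R \<le> theta_const * pnear x m" using m by auto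
    have "Suc m \<le> ct x y"
    proof (rule ccontr)
      assume "\<not> Suc m \<le> ct x y"
      then have "theta_const * pnear x m \<le> K\<^sup>2 * \<Theta> x y"
        by (intro pnear_le_Theta[OF x y(1) \<open>x \<noteq> y\<close>]) simp
      also have "\<dots> < K\<^sup>2 * R" using y(2) K_ge_1 by simp
      finally show False using \<open>K\<^sup>2 * R \<le> theta_const * pnear x m\<close> by simp
    qed
    then have "dist x y < 4 * (1/a)^Suc m"
      using dist_lt_ctop[OF x y(1) \<open>x \<noteq> y\<close>] scale_antimono[of "Suc m" "ct x y"] by simp
    then show ?thesis using scale_Suc_le[of m] by simp
  qed
qed

text \<open>\<open>\<Theta>\<close>-balls are relatively open in \<open>X\<close>, since \<open>\<Theta>\<close> is small on small metric balls.\<close>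
lemma Dball_Theta_borel:
  assumes x: "x \<in> X" shows "Dball X \<Theta> x r \<in> sets borel"
proof -
  define D where "D = Dball X \<Theta> x r"
  have "\<exists>j. K\<^sup>2 * pnear y j < r - \<Theta> x y" if yD: "y \<in> D" for y
  proof -
    have "y \<in> X" "0 < (r - \<Theta> x y) / K\<^sup>2" using yD K_ge_1 unfolding D_def Dball_def by auto
    then obtain j where "pnear y j < (r - \<Theta> x y) / K\<^sup>2"
      using pnear_eventually_lt[of y] by blast
    then show ?thesis using K_ge_1 by (intro exI[of _ j]) (simp add: field_simps)
  qed
  then obtain j where j: "\<And>y. y \<in> D \<Longrightarrow> K\<^sup>2 * pnear y (j y) < r - \<Theta> x y" by metis
  define U where "U = (\<Union>y\<in>D. ball y ((1/a)^j y))"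
  have "D = X \<inter> U"
  proof
    show "D \<subseteq> X \<inter> U" unfolding U_def using scale_pos by (auto simp: D_def Dball_def)
    show "X \<inter> U \<subseteq> D"
    proof
      fix z assume z: "z \<in> X \<inter> U"
      then obtain y where y: "y \<in> D" "dist y z < (1/a)^j y" unfolding U_def by auto
      have yX: "y \<in> X" using y(1) unfolding D_def Dball_def by auto
      have "\<Theta> x z \<le> \<Theta> x y + \<Theta> y z" using Theta_triangle[OF x yX] z by auto
      also have "\<Theta> y z \<le> K\<^sup>2 * pnear y (j y)" using Theta_le_pnear[OF yX _ y(2)] z by auto
      finally show "z \<in> D" using j[OF y(1)] z unfolding D_def Dball_def by auto
    qed
  qed
  moreover have "open U" unfolding U_def by auto
  ultimately show ?thesis unfolding D_def using closed_X by auto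
qed

end

section \<open>The limit measure\<close>

locale homogeneity_setting = theta_filling +
  fixes p C :: real and mu :: "nat \<Rightarrow> 'a \<times> nat \<Rightarrow> real" and \<mu> :: "'a measure"
  assumes doubling_X: "doubling X" and p_pos: "0 < p" and C_ge: "em powr (- p) \<le> C"
    and mu_pos: "\<And>k u. u \<in> level Xs k \<Longrightarrow> 0 < mu k u"
    and mu_sum: "\<And>k. (\<Sum>u\<in>level Xs k. mu k u) = 1"
    and compatible: "\<And>k. compatible Xs par rho p C k (mu k) (mu (Suc k))"
    and balanced: "\<And>k. balanced X a lam Xs par rho p C (Suc k) (mu (Suc k))"
    and coupled: "\<And>k. coupled (tmu (level Xs k) (mu k)) (tmu (level Xs (Suc k)) (mu (Suc k)))
                   ((1 + 2 * lam / a) * (1/a) ^ k)"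
    and limit: "sub_weak_limit (\<lambda>k. tmu (level Xs k) (mu k)) \<mu>"
begin

abbreviation mk :: "nat \<Rightarrow> 'a set \<Rightarrow> real" where
  "mk k \<equiv> mass (level Xs k) (mu k)"

lemma mu_nonneg: "u \<in> level Xs k \<Longrightarrow> 0 \<le> mu k u"
  using mu_pos less_imp_le by blast

lemma measure_tmu_level: "A \<in> sets borel \<Longrightarrow> measure (tmu (level Xs k) (mu k)) A = mk k A"
  by (rule measure_tmu[OF finite_level mu_nonneg])

lemma mk_mono: "A \<subseteq> B \<Longrightarrow> mk k A \<le> mk k B"
  by (rule mass_mono[OF finite_level mu_nonneg])

lemma mk_UNIV: "mk k UNIV = 1"
  unfolding mass_def using mu_sum by simp

lemma mk_outside_X: "mk k (- X) = 0"
proof -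
  have "{u \<in> level Xs k. fst u \<in> - X} = {}" using level_fst_in_X by auto
  then show ?thesis unfolding mass_def by (metis sum.empty)
qed

text \<open>Since \<open>\<lambda> \<le> a\<close> and \<open>a \<ge> 6\<close>, the coupling radii telescope.\<close>
lemma coupling_radius_le: "(1 + 2 * lam / a) * (1/a)^k \<le> 18/5 * (1/a)^k - 18/5 * (1/a)^Suc k"
proof -
  have "lam / a \<le> 1" using filling_facts(1) a_ge_6 by simp
  then have "1 + 2 * lam / a \<le> 3" by simp
  then have "(1 + 2 * lam / a) * (1/a)^k \<le> 3 * (1/a)^k"
    using scale_pos[of k] by (intro mult_right_mono) auto
  then show ?thesis using scale_Suc_le[of k] by linarith
qed

lemma mk_ball_coupled:
  "mk k (ball z s) \<le> mk (Suc k) (ball z (s + (1 + 2 * lam / a) * (1/a)^k))"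
  "mk (Suc k) (ball z s) \<le> mk k (ball z (s + (1 + 2 * lam / a) * (1/a)^k))"
  using coupled_emeasure_ball_le[OF coupled[of k], of z s]
  by (simp_all add: emeasure_tmu[OF finite_level mu_nonneg] mass_nonneg mu_nonneg)

lemma mk_ball_le_later:
  "mk m (ball z s) \<le> mk (m + d) (ball z (s + 18/5 * ((1/a)^m - (1/a)^(m + d))))"
proof (induction d)
  case (Suc d)
  let ?s = "s + 18/5 * ((1/a)^m - (1/a)^(m + d))"
  have "mk (m + d) (ball z ?s) \<le> mk (Suc (m + d)) (ball z (?s + (1 + 2 * lam / a) * (1/a)^(m + d)))"
    by (rule mk_ball_coupled(1))
  also have "\<dots> \<le> mk (Suc (m + d)) (ball z (s + 18/5 * ((1/a)^m - (1/a)^Suc (m + d))))"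
    using coupling_radius_le[of "m + d"]
    unfolding right_diff_distrib by (intro mk_mono subset_ball) linarith
  finally show ?case using Suc by simp
qed simp

lemma mk_ball_le_earlier:
  "mk (m + d) (ball z s) \<le> mk m (ball z (s + 18/5 * ((1/a)^m - (1/a)^(m + d))))"
proof (induction d arbitrary: s)
  case (Suc d)
  have "mk (m + Suc d) (ball z s) \<le> mk (m + d) (ball z (s + (1 + 2 * lam / a) * (1/a)^(m + d)))"
    using mk_ball_coupled(2)[of "m + d"] by simp
  also have "\<dots> \<le> mk m (ball z (s + (1 + 2 * lam / a) * (1/a)^(m + d) + 18/5 * ((1/a)^m - (1/a)^(m + d))))"
    by (rule Suc.IH)
  also have "\<dots> \<le> mk m (ball z (s + 18/5 * ((1/a)^m - (1/a)^Suc (m + d))))"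
    using coupling_radius_le[of "m + d"]
    unfolding right_diff_distrib by (intro mk_mono subset_ball) linarith
  finally show ?case by simp
qed simp

definition subseq :: "nat \<Rightarrow> nat" where
  "subseq = (SOME s. strict_mono s \<and> (\<forall>g::'a \<Rightarrow> real. continuous_on UNIV g \<and> bounded (range g) \<longrightarrow>
      (\<lambda>j. integral\<^sup>L (tmu (level Xs (s j)) (mu (s j))) g) \<longlonglongrightarrow> integral\<^sup>L \<mu> g))"

lemma sets_\<mu>: "sets \<mu> = sets borel" and finite_\<mu>: "finite_measure \<mu>"
  using limit unfolding sub_weak_limit_def by auto

lemma subseq: "strict_mono subseq"
  and subseq_tendsto: "\<And>g::'a \<Rightarrow> real. continuous_on UNIV g \<Longrightarrow> bounded (range g) \<Longrightarrow>
      (\<lambda>j. integral\<^sup>L (tmu (level Xs (subseq j)) (mu (subseq j))) g) \<longlonglongrightarrow> integral\<^sup>L \<mu> g"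
proof -
  have "\<exists>s. strict_mono s \<and> (\<forall>g::'a \<Rightarrow> real. continuous_on UNIV g \<and> bounded (range g) \<longrightarrow>
      (\<lambda>j. integral\<^sup>L (tmu (level Xs (s j)) (mu (s j))) g) \<longlonglongrightarrow> integral\<^sup>L \<mu> g)"
    using limit unfolding sub_weak_limit_def by simp
  then have "strict_mono subseq \<and> (\<forall>g::'a \<Rightarrow> real. continuous_on UNIV g \<and> bounded (range g) \<longrightarrow>
      (\<lambda>j. integral\<^sup>L (tmu (level Xs (subseq j)) (mu (subseq j))) g) \<longlonglongrightarrow> integral\<^sup>L \<mu> g)"
    unfolding subseq_def by (rule someI_ex)
  then show "strict_mono subseq" "\<And>g::'a \<Rightarrow> real. continuous_on UNIV g \<Longrightarrow> bounded (range g) \<Longrightarrow>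
      (\<lambda>j. integral\<^sup>L (tmu (level Xs (subseq j)) (mu (subseq j))) g) \<longlonglongrightarrow> integral\<^sup>L \<mu> g"
    by auto
qed

lemma finite_measure_tmu_level: "finite_measure (tmu (level Xs k) (mu k))"
  by (rule finite_measure_tmu[OF finite_level]) (rule mu_nonneg)

lemma weak_limit: "weak_limit_subseq (\<lambda>k. tmu (level Xs k) (mu k)) \<mu> subseq"
  by (intro weak_limit_subseq.intro subseq_tendsto finite_measure_tmu_level sets_tmu sets_\<mu> finite_\<mu>)

lemma measure_\<mu>_UNIV: "measure \<mu> UNIV = 1"
  using weak_limit_subseq.limit_measure_UNIV[OF weak_limit] measure_tmu_level mk_UNIV by simp

lemma measure_\<mu>_inter_X: "A \<in> sets borel \<Longrightarrow> measure \<mu> (A \<inter> X) = measure \<mu> A"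
proof -
  assume A: "A \<in> sets borel"
  interpret finite_measure \<mu> by (rule finite_\<mu>)
  have X: "X \<in> sets \<mu>" "- X \<in> sets \<mu>" and A': "A \<in> sets \<mu>" using closed_X sets_\<mu> A by auto
  have "emeasure \<mu> (- X) = 0"
    using weak_limit_subseq.limit_null_outside_closed[OF weak_limit closed_X] x0_in_X
      measure_tmu_level[of "- X"] mk_outside_X closed_X by auto
  moreover have "emeasure \<mu> (A \<inter> - X) \<le> emeasure \<mu> (- X)" using X A' by (intro emeasure_mono) auto
  ultimately have "measure \<mu> (A \<inter> - X) = 0" by (simp add: measure_def)
  moreover have "measure \<mu> A = measure \<mu> ((A \<inter> X) \<union> (A \<inter> - X))"
    by (rule arg_cong[where f="measure \<mu>"]) blast
  moreover have "\<dots> = measure \<mu> (A \<inter> X) + measure \<mu> (A \<inter> - X)"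
    using X A' by (intro finite_measure_Union) auto
  ultimately show ?thesis by simp
qed

lemma measure_\<mu>_X: "measure \<mu> X = 1"
  using measure_\<mu>_inter_X[of UNIV] measure_\<mu>_UNIV by simp

text \<open>Mass placed near \<open>x\<close> at level \<open>n + 1\<close> moves by less than \<open>a\<^sup>-\<^sup>n\<close> at all later levels.\<close>
lemma vnear_mass_le_limit_ball:
  assumes x: "x \<in> X" shows "mu (Suc n) (vnear x (Suc n)) \<le> measure \<mu> (ball x ((1/a)^n))"
proof -
  define w where "w = vnear x (Suc n)"
  have w: "w \<in> level Xs (Suc n)" "dist (fst w) x < (1/a)^Suc n"
    unfolding w_def by (rule vnear(1)[OF x], rule vnear(2)[OF x])
  define e where "e = ((1/a)^n - dist (fst w) x - 18/5 * (1/a)^Suc n) / 2"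
  have "0 < (1/a)^n - dist (fst w) x - 18/5 * (1/a)^Suc n"
    using w(2) scale_Suc_le[of n] scale_pos[of "Suc n"] by linarith
  then have e: "0 < e" unfolding e_def by simp
  define R1 where "R1 = e + 18/5 * (1/a)^Suc n"
  have "mu (Suc n) w \<le> measure \<mu> (ball (fst w) (R1 + e))"
  proof (rule weak_limit_subseq.limit_ball_ge[OF weak_limit])
    show "R1 < R1 + e" using e by simp
    fix j assume "Suc n \<le> j"
    then have "Suc n \<le> subseq j" using seq_suble[OF subseq, of j] by linarith
    then obtain d where d: "subseq j = Suc n + d" using le_Suc_ex by blast
    have "mu (Suc n) w \<le> mk (Suc n) (ball (fst w) e)"
      unfolding mass_def using w(1) e mu_nonneg finite_level
      by (intro member_le_sum[of w _ "mu (Suc n)"]) auto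
    also have "\<dots> \<le> mk (Suc n + d) (ball (fst w) (e + 18/5 * ((1/a)^Suc n - (1/a)^(Suc n + d))))"
      by (rule mk_ball_le_later)
    also have "\<dots> \<le> mk (Suc n + d) (ball (fst w) R1)"
      unfolding R1_def using scale_pos[of "Suc n + d"] by (intro mk_mono subset_ball) simp
    finally show "mu (Suc n) w \<le> measure (tmu (level Xs (subseq j)) (mu (subseq j))) (ball (fst w) R1)"
      using d by (simp add: measure_tmu_level)
  qed
  also have "\<dots> \<le> measure \<mu> (ball x ((1/a)^n))"
  proof -
    interpret finite_measure \<mu> by (rule finite_\<mu>)
    have "ball (fst w) (R1 + e) \<subseteq> ball x ((1/a)^n)"
    proof
      fix z assume "z \<in> ball (fst w) (R1 + e)"
      moreover have "dist x z \<le> dist (fst w) x + dist (fst w) z" by (metis dist_commute dist_triangle)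
      ultimately show "z \<in> ball x ((1/a)^n)" unfolding R1_def e_def by simp
    qed
    then show ?thesis using sets_\<mu> by (intro finite_measure_mono) auto
  qed
  finally show ?thesis unfolding w_def .
qed

lemma limit_ball_le_mk:
  assumes x: "x \<in> X" shows "measure \<mu> (ball x ((2/3) * (1/a)^m)) \<le> mk m (ball x (5 * (1/a)^m))"
proof (rule weak_limit_subseq.limit_ball_le[OF weak_limit])
  show "(2/3) * (1/a)^m < (2/3) * (1/a)^m + (1/10) * (1/a)^m" using scale_pos[of m] by simp
  fix j assume "m \<le> j"
  then have "m \<le> subseq j" using seq_suble[OF subseq, of j] by linarith
  then obtain d where d: "subseq j = m + d" using le_Suc_ex by blast
  have "mk (m + d) (ball x ((2/3) * (1/a)^m + (1/10) * (1/a)^m))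
      \<le> mk m (ball x ((2/3) * (1/a)^m + (1/10) * (1/a)^m + 18/5 * ((1/a)^m - (1/a)^(m + d))))"
    by (rule mk_ball_le_earlier)
  also have "\<dots> \<le> mk m (ball x (5 * (1/a)^m))"
    using scale_pos[of m] scale_pos[of "m + d"] unfolding right_diff_distrib
    by (intro mk_mono subset_ball) linarith
  finally show "measure (tmu (level Xs (subseq j)) (mu (subseq j))) (ball x ((2/3) * (1/a)^m + (1/10) * (1/a)^m))
      \<le> mk m (ball x (5 * (1/a)^m))"
    using d by (simp add: measure_tmu_level)
qed

end

section \<open>Homogeneity of the limit measure\<close>

context homogeneity_setting
begin

definition Nd :: nat where
  "Nd = (SOME N. \<forall>x\<in>X. \<forall>r>0. \<forall>S. S \<subseteq> Xball X x (8 * r) \<longrightarrow> separated S r \<longrightarrow> card S \<le> N)"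

lemma card_separated_le_Nd:
  "x \<in> X \<Longrightarrow> 0 < r \<Longrightarrow> S \<subseteq> Xball X x (8 * r) \<Longrightarrow> separated S r \<Longrightarrow> card S \<le> Nd"
  using someI_ex[OF doubling_card_separated_bounded[OF doubling_X]] unfolding Nd_def by blast

lemma card_level_ball_le:
  assumes x: "x \<in> X" shows "card {u \<in> level Xs m. fst u \<in> ball x (5 * (1/a)^m)} \<le> Nd"
proof -
  define U where "U = {u \<in> level Xs m. fst u \<in> ball x (5 * (1/a)^m)}"
  have "inj_on fst U" unfolding U_def by (rule inj_onI) (auto simp: level_iff prod_eq_iff)
  then have "card U = card (fst ` U)" by (simp add: card_image)
  also have "\<dots> \<le> Nd"
  proof (rule card_separated_le_Nd[OF x scale_pos])
    show "fst ` U \<subseteq> Xball X x (8 * (1/a)^m)"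
      unfolding U_def using scale_pos[of m] level_fst_in_X by (auto simp: Xball_def)
    show "separated (fst ` U) ((1/a)^m)"
      using Xs_separated[of m] unfolding U_def separated_def by (auto simp: level_iff)
  qed
  finally show ?thesis unfolding U_def .
qed

lemma C_ge_1: "1 \<le> C"
proof -
  have "em powr p \<le> 1" using em_pos em_le_ep ep_lt_1 p_pos by (intro powr_le1) auto
  then have "1 \<le> inverse (em powr p)" using em_pos by (simp add: one_le_inverse_iff)
  then show ?thesis using C_ge by (simp add: powr_minus)
qed

lemma balanced_near:
  assumes "u \<in> level Xs m" "v \<in> level Xs m" "u = v \<or> hadj X a lam Xs u v"
  shows "mu m u / \<pi> u powr p \<le> C\<^sup>2 * mu m v / \<pi> v powr p"
proof (cases "u = v")
  case True
  have "mu m u / \<pi> u powr p = 1 * (mu m v / \<pi> v powr p)" using True by simp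
  also have "\<dots> \<le> C\<^sup>2 * (mu m v / \<pi> v powr p)"
    using C_ge_1 mu_nonneg[OF assms(2)] by (intro mult_right_mono) (simp_all add: one_le_power)
  finally show ?thesis by simp
next
  case False
  have "m \<noteq> 0"
  proof
    assume "m = 0"
    then have "u = (x0, 0)" "v = (x0, 0)" using assms(1,2) level_0 by simp_all
    then show False using False by simp
  qed
  then obtain k where k: "m = Suc k" using not0_implies_Suc by blast
  have "adjacent u v" unfolding adj_def using assms(3) False by simp
  then show ?thesis using balanced[of k, unfolded balanced_def] assms(1,2) unfolding k by blast
qed

lemma mu_le_vnear:
  assumes x: "x \<in> X" and u: "u \<in> level Xs m" "dist (fst u) x < 6 * (1/a)^m"
  shows "mu m u \<le> C\<^sup>2 * K powr p * mu m (vnear x m)"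
proof -
  define v where "v = vnear x m"
  have v: "v \<in> level Xs m" "dist (fst v) x < 6 * (1/a)^m"
    unfolding v_def using vnear[OF x, of m] scale_pos[of m] by auto
  have uv: "u = v \<or> hadj X a lam Xs u v" by (rule near_vertices_hadj[OF u(1) v(1) x u(2) v(2)])
  have pos: "0 < \<pi> u" "0 < \<pi> v" using u(1) v(1) level_in_verts piw_pos by blast+
  have "\<pi> u \<le> K * \<pi> v" using piw_le_K[OF uv] v(1) level_in_verts by blast
  then have "\<pi> u powr p \<le> K powr p * \<pi> v powr p"
    using powr_mono2[of p "\<pi> u" "K * \<pi> v"] p_pos pos K_ge_1 by (simp add: powr_mult)
  have "mu m u = (mu m u / \<pi> u powr p) * \<pi> u powr p" using pos by simp
  also have "\<dots> \<le> (C\<^sup>2 * mu m v / \<pi> v powr p) * \<pi> u powr p"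
    using balanced_near[OF u(1) v(1) uv] by (rule mult_right_mono) simp
  also have "\<dots> \<le> (C\<^sup>2 * mu m v / \<pi> v powr p) * (K powr p * \<pi> v powr p)"
    using \<open>\<pi> u powr p \<le> K powr p * \<pi> v powr p\<close> mu_nonneg[OF v(1)] by (intro mult_left_mono) auto
  also have "\<dots> = C\<^sup>2 * K powr p * mu m v" using pos by simp
  finally show ?thesis unfolding v_def .
qed

lemma compatible_ancestor:
  assumes w: "w \<in> level Xs n" and d: "d \<le> n"
  shows "mu (n - d) ((par ^^ d) w) / \<pi> ((par ^^ d) w) powr p \<le> mu n w / \<pi> w powr p"
  using d
proof (induction d)
  case (Suc d)
  define v where "v = (par ^^ d) w"
  have "v \<in> level Xs (Suc (n - Suc d))"
    using ancestor_level_dist(1)[OF w, of d] Suc.prems unfolding v_def by (simp add: Suc_diff_Suc)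
  then have "mu (n - Suc d) (par v) / \<pi> (par v) powr p \<le> mu (Suc (n - Suc d)) v / \<pi> v powr p"
    using compatible[of "n - Suc d"] unfolding compatible_def by blast
  moreover have "Suc (n - Suc d) = n - d" "par v = (par ^^ Suc d) w"
    using Suc.prems unfolding v_def by auto
  ultimately have "mu (n - Suc d) ((par ^^ Suc d) w) / \<pi> ((par ^^ Suc d) w) powr p
      \<le> mu (n - d) v / \<pi> v powr p" by simp
  also have "\<dots> \<le> mu n w / \<pi> w powr p" unfolding v_def using Suc by simp
  finally show ?case .
qed simp

text \<open>Balance at level \<open>m\<close> and compatibility along the genealogy of \<open>vnear x k\<close> compare the
  masses near \<open>x\<close> at two levels.\<close>
lemma vnear_mass_ratio:
  assumes x: "x \<in> X" and mk: "m \<le> k"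
  shows "mu m (vnear x m) \<le> C\<^sup>2 * (pnear x m / pnear x k) powr p * mu k (vnear x k)"
proof -
  define A where "A = (par ^^ (k - m)) (vnear x k)"
  have A: "A \<in> level Xs m" "A = vnear x m \<or> hadj X a lam Xs A (vnear x m)"
    using ancestor_vnear_hadj[OF x mk] unfolding A_def by auto
  then have near: "vnear x m = A \<or> hadj X a lam Xs (vnear x m) A" using hadj_sym by blast
  have pos: "0 < pnear x m" "0 < pnear x k" using pnear_pos[OF x] by auto
  have "mu m (vnear x m) / pnear x m powr p \<le> C\<^sup>2 * (mu m A / \<pi> A powr p)"
    unfolding pnear_def using balanced_near[OF vnear(1)[OF x] A(1) near] by simp
  also have "\<dots> \<le> C\<^sup>2 * (mu k (vnear x k) / pnear x k powr p)"
    using compatible_ancestor[OF vnear(1)[OF x, of k], of "k - m"] mk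
    unfolding pnear_def A_def by (intro mult_left_mono) auto
  finally have "mu m (vnear x m) \<le> C\<^sup>2 * (mu k (vnear x k) / pnear x k powr p) * pnear x m powr p"
    using pos by (simp add: divide_le_eq)
  also have "\<dots> = C\<^sup>2 * (pnear x m / pnear x k) powr p * mu k (vnear x k)"
    using pos by (simp add: powr_divide field_simps)
  finally show ?thesis .
qed

lemma limit_ball_le_vnear_mass:
  assumes x: "x \<in> X"
  shows "measure \<mu> (ball x ((2/3) * (1/a)^m)) \<le> Nd * (C\<^sup>2 * K powr p * mu m (vnear x m))"
proof -
  define U where "U = {u \<in> level Xs m. fst u \<in> ball x (5 * (1/a)^m)}"
  have "measure \<mu> (ball x ((2/3) * (1/a)^m)) \<le> sum (mu m) U"
    using limit_ball_le_mk[OF x] unfolding mass_def U_def .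
  also have "\<dots> \<le> real (card U) * (C\<^sup>2 * K powr p * mu m (vnear x m))"
  proof (rule sum_bounded_above)
    fix u assume "u \<in> U"
    then show "mu m u \<le> C\<^sup>2 * K powr p * mu m (vnear x m)"
      using scale_pos[of m] unfolding U_def by (intro mu_le_vnear[OF x]) (auto simp: dist_commute)
  qed
  also have "\<dots> \<le> Nd * (C\<^sup>2 * K powr p * mu m (vnear x m))"
    using card_level_ball_le[OF x, of m] mu_nonneg[OF vnear(1)[OF x]]
    unfolding U_def by (intro mult_right_mono) auto
  finally show ?thesis .
qed

lemma measure_Dball_Theta_le_vnear_mass:
  assumes x: "x \<in> X" and m: "m = 0 \<or> K\<^sup>2 * R \<le> theta_const * pnear x m"
  shows "measure \<mu> (Dball X \<Theta> x R) \<le> Nd * (C\<^sup>2 * K powr p * mu m (vnear x m))"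
proof -
  interpret finite_measure \<mu> by (rule finite_\<mu>)
  have "measure \<mu> (Dball X \<Theta> x R) \<le> measure \<mu> (ball x ((2/3) * (1/a)^m))"
    using Dball_Theta_subset_ball[OF x m] sets_\<mu> by (intro finite_measure_mono) auto
  also have "\<dots> \<le> Nd * (C\<^sup>2 * K powr p * mu m (vnear x m))" by (rule limit_ball_le_vnear_mass[OF x])
  finally show ?thesis .
qed

lemma vnear_mass_le_Dball_Theta:
  assumes x: "x \<in> X" and n: "K\<^sup>2 * pnear x n < r"
  shows "mu (Suc n) (vnear x (Suc n)) \<le> measure \<mu> (Dball X \<Theta> x r)"
proof -
  interpret finite_measure \<mu> by (rule finite_\<mu>)
  have "mu (Suc n) (vnear x (Suc n)) \<le> measure \<mu> (ball x ((1/a)^n))"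
    by (rule vnear_mass_le_limit_ball[OF x])
  also have "\<dots> = measure \<mu> (ball x ((1/a)^n) \<inter> X)" by (rule measure_\<mu>_inter_X[symmetric]) simp
  also have "\<dots> \<le> measure \<mu> (Dball X \<Theta> x r)"
    using ball_subset_Dball_Theta[OF x n] Dball_Theta_borel[OF x] sets_\<mu>
    by (intro finite_measure_mono) auto
  finally show ?thesis .
qed

definition ratio_const :: real where
  "ratio_const = K ^ 4 / (min theta_const 1 * (em / K) ^ 3)"

lemma pnear_ratio_le:
  assumes x: "x \<in> X" and r: "0 < r" and n: "r \<le> K\<^sup>2 * pnear x n"
    and m: "min theta_const 1 * pnear x (Suc m) < K\<^sup>2 * R"
  shows "pnear x m / pnear x (Suc (Suc n)) \<le> ratio_const * (R / r)"
proof -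
  define c where "c = min theta_const 1"
  define \<kappa> where "\<kappa> = em / K"
  have pos: "0 < c" "0 < \<kappa>" "0 < K"
    unfolding c_def \<kappa>_def using theta_const_pos em_pos K_ge_1 by auto
  have step: "\<kappa> * pnear x j \<le> pnear x (Suc j)" for j
    unfolding \<kappa>_def by (rule pnear_Suc_ge[OF x])
  have "c * (\<kappa> * pnear x m) < K\<^sup>2 * R"
    using mult_left_mono[OF step[of m], of c] pos m unfolding c_def by linarith
  then have upper: "pnear x m \<le> K\<^sup>2 * R / (c * \<kappa>)"
    using pos by (simp add: field_simps)
  have "\<kappa> * (\<kappa> * (r / K\<^sup>2)) \<le> \<kappa> * (\<kappa> * pnear x n)"
    using n pos by (intro mult_left_mono) (auto simp: field_simps)
  also have "\<dots> \<le> \<kappa> * pnear x (Suc n)" using step[of n] pos by (intro mult_left_mono) auto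
  also have "\<dots> \<le> pnear x (Suc (Suc n))" by (rule step)
  finally have lower: "\<kappa>\<^sup>2 * r / K\<^sup>2 \<le> pnear x (Suc (Suc n))" by (simp add: power2_eq_square)
  have "pnear x m / pnear x (Suc (Suc n)) \<le> (K\<^sup>2 * R / (c * \<kappa>)) / (\<kappa>\<^sup>2 * r / K\<^sup>2)"
    using upper lower pnear_pos[OF x, of m] pos r by (intro frac_le) auto
  also have "\<dots> = ratio_const * (R / r)"
    unfolding ratio_const_def c_def[symmetric] \<kappa>_def[symmetric] using pos r
    by (simp add: field_simps power2_eq_square power3_eq_cube power4_eq_xxxx)
  finally show ?thesis .
qed

definition hom_const :: real where
  "hom_const = max 1 (Nd * C ^ 4 * K powr p * ratio_const powr p)"

text \<open>The level \<open>m\<close> of the metric ball containing \<open>Dball X \<Theta> x R\<close>.\<close>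
lemma outer_scale_exists:
  assumes x: "x \<in> X" and r: "0 < r" "r \<le> R" and n: "K\<^sup>2 * pnear x (Suc n) < r"
  shows "\<exists>m \<le> Suc n. (m = 0 \<or> K\<^sup>2 * R \<le> theta_const * pnear x m) \<and>
    min theta_const 1 * pnear x (Suc m) < K\<^sup>2 * R"
proof -
  define c where "c = min theta_const 1"
  have c_le: "c \<le> 1" "c \<le> theta_const" "0 < c"
    unfolding c_def using theta_const_pos by auto
  have "0 < K\<^sup>2 * R / c" using c_le(3) r K_ge_1 by (intro divide_pos_pos mult_pos_pos) auto
  then obtain j where "\<forall>i\<ge>j. pnear x i < K\<^sup>2 * R / c" using pnear_eventually_lt[OF x] by blast
  then have "c * pnear x (Suc j) < K\<^sup>2 * R" using c_le(3) by (simp add: less_divide_eq mult.commute)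
  then obtain m where m: "c * pnear x (Suc m) < K\<^sup>2 * R" "\<forall>i<m. \<not> c * pnear x (Suc i) < K\<^sup>2 * R"
    using exists_least_iff[of "\<lambda>i. c * pnear x (Suc i) < K\<^sup>2 * R"] by blast
  have m_big: "K\<^sup>2 * R \<le> c * pnear x m" if "m \<noteq> 0"
    using m(2) that by (cases m) (auto simp: not_less)
  have "m \<le> Suc n"
  proof (rule ccontr)
    assume "\<not> m \<le> Suc n"
    then have "K\<^sup>2 * R \<le> c * pnear x m" using m_big by simp
    also have "\<dots> \<le> pnear x m" using c_le pnear_pos[OF x, of m] by (simp add: mult_left_le_one_le)
    also have "\<dots> \<le> K * pnear x (Suc n)" using pnear_antimono[OF x, of "Suc n" m] \<open>\<not> m \<le> Suc n\<close> by simp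
    also have "\<dots> \<le> K\<^sup>2 * pnear x (Suc n)"
      using K_ge_1 pnear_pos[OF x, of "Suc n"] by (simp add: power2_eq_square)
    finally have "K\<^sup>2 * R < r" using n by simp
    moreover have "R \<le> K\<^sup>2 * R" using K_ge_1 r by (simp add: one_le_power)
    ultimately show False using r by simp
  qed
  moreover have "m = 0 \<or> K\<^sup>2 * R \<le> theta_const * pnear x m"
  proof (cases "m = 0")
    case False
    then have "K\<^sup>2 * R \<le> c * pnear x m" by (rule m_big)
    also have "\<dots> \<le> theta_const * pnear x m"
      using c_le pnear_pos[OF x, of m] by (intro mult_right_mono) auto
    finally show ?thesis by simp
  qed simp
  ultimately show ?thesis using m(1) unfolding c_def by auto
qed

lemma homogeneous_at_scale:
  assumes x: "x \<in> X" and r: "0 < r" "r \<le> R"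
    and n: "K\<^sup>2 * pnear x (Suc n) < r" "r \<le> K\<^sup>2 * pnear x n"
  shows "measure \<mu> (Dball X \<Theta> x R) \<le> hom_const * (R / r) powr p * measure \<mu> (Dball X \<Theta> x r)"
proof -
  obtain m where m: "m \<le> Suc n" "m = 0 \<or> K\<^sup>2 * R \<le> theta_const * pnear x m"
      "min theta_const 1 * pnear x (Suc m) < K\<^sup>2 * R"
    using outer_scale_exists[OF x r n(1)] by blast
  let ?w = "mu (Suc (Suc n)) (vnear x (Suc (Suc n)))"
  have w_nonneg: "0 \<le> ?w" using mu_nonneg vnear(1)[OF x] by blast
  have "(pnear x m / pnear x (Suc (Suc n))) powr p \<le> (ratio_const * (R / r)) powr p"
    using pnear_ratio_le[OF x r(1) n(2) m(3)] p_pos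
      divide_pos_pos[OF pnear_pos[OF x, of m] pnear_pos[OF x, of "Suc (Suc n)"]]
    by (auto intro!: powr_mono2)
  also have "\<dots> = ratio_const powr p * (R / r) powr p" by (rule powr_mult)
  finally have "C\<^sup>2 * (pnear x m / pnear x (Suc (Suc n))) powr p * ?w
      \<le> C\<^sup>2 * (ratio_const powr p * (R / r) powr p) * ?w"
    using w_nonneg by (intro mult_right_mono mult_left_mono) auto
  then have mass_m: "mu m (vnear x m) \<le> C\<^sup>2 * (ratio_const powr p * (R / r) powr p) * ?w"
    using vnear_mass_ratio[OF x, of m "Suc (Suc n)"] m(1) by linarith
  have "measure \<mu> (Dball X \<Theta> x R) \<le> Nd * (C\<^sup>2 * K powr p * mu m (vnear x m))"
    by (rule measure_Dball_Theta_le_vnear_mass[OF x m(2)])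
  also have "\<dots> \<le> Nd * (C\<^sup>2 * K powr p * (C\<^sup>2 * (ratio_const powr p * (R / r) powr p) * ?w))"
    using mass_m by (intro mult_left_mono) auto
  also have "\<dots> = (Nd * C ^ 4 * K powr p * ratio_const powr p) * (R / r) powr p * ?w"
    by (simp add: power_mult_distrib power2_eq_square power4_eq_xxxx mult_ac)
  also have "\<dots> \<le> hom_const * (R / r) powr p * ?w"
    unfolding hom_const_def using w_nonneg by (intro mult_right_mono) auto
  also have "\<dots> \<le> hom_const * (R / r) powr p * measure \<mu> (Dball X \<Theta> x r)"
    using vnear_mass_le_Dball_Theta[OF x n(1)] hom_const_def by (intro mult_left_mono) auto
  finally show ?thesis .
qed

end

context homogeneity_setting
begin

lemma homogeneous_Dball_Theta:
  assumes x: "x \<in> X" and r: "0 < r" "r \<le> R"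
  shows "measure \<mu> (Dball X \<Theta> x R) \<le> hom_const * (R / r) powr p * measure \<mu> (Dball X \<Theta> x r)"
proof -
  have "0 < r / K\<^sup>2" using r K_ge_1 by simp
  then obtain j where "\<forall>i\<ge>j. pnear x i < r / K\<^sup>2" using pnear_eventually_lt[OF x] by blast
  then have "K\<^sup>2 * pnear x j < r" using K_ge_1 by (simp add: less_divide_eq mult.commute)
  then obtain n where n: "K\<^sup>2 * pnear x n < r" "\<forall>i<n. \<not> K\<^sup>2 * pnear x i < r"
    using exists_least_iff[of "\<lambda>i. K\<^sup>2 * pnear x i < r"] by blast
  show ?thesis
  proof (cases n)
    case 0
    interpret finite_measure \<mu> by (rule finite_\<mu>)
    have "X \<subseteq> ball x ((1/a)^n)"
    proof
      fix y assume "y \<in> X"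
      then have "dist x y \<le> 1/2" by (rule dist_le_half[OF x])
      then show "y \<in> ball x ((1/a)^n)" using 0 by simp
    qed
    then have "Dball X \<Theta> x r = X"
      using ball_subset_Dball_Theta[OF x n(1)] unfolding Dball_def by blast
    moreover have "Dball X \<Theta> x R \<subseteq> X" unfolding Dball_def by auto
    ultimately have "measure \<mu> (Dball X \<Theta> x R) \<le> 1 * measure \<mu> (Dball X \<Theta> x r)"
      using closed_X sets_\<mu> by (simp add: finite_measure_mono)
    also have "\<dots> \<le> hom_const * (R / r) powr p * measure \<mu> (Dball X \<Theta> x r)"
    proof (rule mult_right_mono)
      have "1 \<le> (R / r) powr p" using r p_pos by (intro ge_one_powr_ge_zero) auto
      then have "1 * 1 \<le> hom_const * (R / r) powr p"
        unfolding hom_const_def by (intro mult_mono) auto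
      then show "1 \<le> hom_const * (R / r) powr p" by simp
    qed simp
    finally show ?thesis .
  next
    case (Suc n')
    then show ?thesis
      using homogeneous_at_scale[OF x r, of n'] n by (simp add: not_less)
  qed
qed

lemma measure_Dball_Theta_pos:
  assumes x: "x \<in> X" and R: "0 < R" shows "0 < measure \<mu> (Dball X \<Theta> x R)"
proof -
  have "1 = measure \<mu> (Dball X \<Theta> x (max R 1))"
    using Dball_Theta_eq_X[OF x, of "max R 1"] measure_\<mu>_X by simp
  also have "\<dots> \<le> hom_const * (max R 1 / R) powr p * measure \<mu> (Dball X \<Theta> x R)"
    by (rule homogeneous_Dball_Theta[OF x R]) simp
  finally have "1 \<le> hom_const * (max R 1 / R) powr p * measure \<mu> (Dball X \<Theta> x R)" .
  moreover have "0 \<le> measure \<mu> (Dball X \<Theta> x R)" by simp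
  ultimately show ?thesis by (cases "measure \<mu> (Dball X \<Theta> x R) = 0") (auto simp: less_le)
qed

lemma p_homogeneous_Theta: "p_homogeneous X \<Theta> p \<mu>"
proof -
  interpret finite_measure \<mu> by (rule finite_\<mu>)
  have "emeasure \<mu> X \<noteq> 0" using measure_\<mu>_X by (simp add: emeasure_eq_measure)
  then show ?thesis unfolding p_homogeneous_def using homogeneous_Dball_Theta by blast
qed

lemma assouad_dim_Theta_le: "assouad_dim X \<Theta> \<le> ereal p"
proof -
  interpret homogeneous_measure X \<Theta> \<mu> p hom_const
    by (rule homogeneous_measure.intro[OF finite_\<mu>])
      (use Dball_Theta_borel sets_\<mu> Theta_sym Theta_triangle measure_Dball_Theta_pos
        homogeneous_Dball_Theta in auto)
  show ?thesis by (rule assouad_dim_le)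
qed

end

theorem proposition3p16:
  fixes X :: "'a::metric_space set" and a lam :: real and Xs :: "nat \<Rightarrow> 'a set" and x0 :: 'a
    and par :: "'a \<times> nat \<Rightarrow> 'a \<times> nat" and rho :: "'a \<times> nat \<Rightarrow> real"
    and p em ep C :: real and mu :: "nat \<Rightarrow> 'a \<times> nat \<Rightarrow> real" and \<mu> :: "'a measure"
  assumes "compact X" and "doubling X" and "diameter X = 1/2"
    and "hyperbolic_filling X a lam Xs x0 par"
    and "0 < p"
    and "H1 Xs rho em ep"
    and "H2 X a lam Xs par rho"
    and "H3 X a lam Xs par rho"
    and "H4 Xs par rho p"
    and "em powr (- p) \<le> C"
    and "\<forall>k. \<forall>u\<in>level Xs k. 0 < mu k u"
    and "\<forall>k. (\<Sum>u\<in>level Xs k. mu k u) = 1"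
    and "mu 0 (x0, 0) = 1"
    and "\<forall>k. compatible Xs par rho p C k (mu k) (mu (Suc k))"
    and "\<forall>k. balanced X a lam Xs par rho p C (Suc k) (mu (Suc k))"
    and "\<forall>k. coupled (tmu (level Xs k) (mu k)) (tmu (level Xs (Suc k)) (mu (Suc k)))
                   ((1 + 2 * lam / a) * (1/a) ^ k)"
    and "sub_weak_limit (\<lambda>k. tmu (level Xs k) (mu k)) \<mu>"
  shows "p_homogeneous X (Theta X a Xs par rho) p \<mu> \<and>
         assouad_dim X (Theta X a Xs par rho) \<le> ereal p"
proof -
  interpret homogeneity_setting X a lam Xs x0 par rho em ep p C mu \<mu>
    by unfold_locales (use assms in auto)
  show ?thesis using p_homogeneous_Theta assouad_dim_Theta_le by blast
qed

end
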